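(* Under the hypotheses of the preceding statement, assume furthermore that $L_\lambda$ is self-adjoint, with normalized eigenvectors $e_1,e_2,\dots$ (a Hilbert basis of $\mathcal H$), so that $\mathcal H^{\mathfrak c}=\mathrm{span}\{e_1,\dots,e_m\}$. Then for $\lambda\in\Lambda_{2k}$, $$h^{\rm app}_\lambda(\xi,\omega)=\sum_{n=m+1}^\infty h^{{\rm app},n}_\lambda(\xi,\omega)e_n,\qquad h^{{\rm app},n}_\lambda(\xi,\omega)=e^{(k-1)z_\sigma(\omega)}\sum_{(i_1,\dots,i_k)\in\mathcal I^k}\xi_{i_1}\cdots\xi_{i_k}\langle F_k(e_{i_1},\dots,e_{i_k}),e_n\rangle M_n^{i_1\cdots i_k}(\omega,\lambda),$$ where $\mathcal I=\{1,\dots,m\}$, $\xi_i=\langle\xi,e_i\rangle$, and $$M_n^{i_1\cdots i_k}(\omega,\lambda)=\int_{-\infty}^0 e^{(\sum_{j=1}^k\beta_{i_j}(\lambda)-\beta_n(\lambda))s+\sigma(k-1)W_s(\omega)}ds;$$ in particular $h^{\rm app}_\lambda$ is a random homogeneous polynomial of order $k$ in $\xi$ and, together with the approximation estimate of the preceding statement, constitutes the leading-order Taylor approximation of $h_\lambda$. Likewise $$\widehat h^{\rm app}_\lambda(\xi,\omega)=\sum_{n\ge m+1}\Big(\sum_{(i_1,\dots,i_k)\in\mathcal I^k}\xi_{i_1}\cdots\xi_{i_k}\langle F_k(e_{i_1},\dots,e_{i_k}),e_n\rangle M_n^{i_1\cdots i_k}(\omega,\lambda)\Big)e_n$$ is a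 random homogeneous polynomial of order $k$ and constitutes the leading-order Taylor approximation of $\widehat h_\lambda$.
   Context: Everything as in the preceding statement: $\mathcal H$, $L_\lambda$ with eigenvalues $\beta_n(\lambda)$, $\alpha$, Wiener space, $W_t$, $\sigma>0$, $z_\sigma(\omega)=-\sigma\int_{-\infty}^0e^\tau W_\tau d\tau$; $F=F_k+O(\|u\|_\alpha^{k+1})$ $C^p$ with $p>k\ge2$ and $F_k$ continuous $k$-linear; principle of exchange of stabilities at $\lambda_c$ with $m$ critical eigenvalues; $\Lambda_{2k}\ni\lambda_c$ open with $0>2k\eta_{\mathfrak c}(2k)>\eta_{\mathfrak s}(2k)$; $h^{\rm app}_\lambda(\xi,\omega)=e^{(k-1)z_\sigma(\omega)}\int_{-\infty}^0e^{\sigma(k-1)W_s(\omega)}e^{-sL_\lambda}P_{\mathfrak s}F_k(e^{sL_\lambda}\xi)ds$, $\widehat h^{\rm app}_\lambda(\xi,\omega)=\int_{-\infty}^0e^{\sigma(k-1)W_s(\omega)}e^{-sL_\lambda}P_{\mathfrak s}F_k(e^{sL_\lambda}\xi)ds$; $h_\lambda$, $\widehat h_\lambda$ the local random (resp. stochastic) critical manifold functions, approximated to order $o(\|\xi\|_\alpha^k)$ by $h^{\rm app}_\lambda$, $\widehat h^{\rm app}_\lambda$ on random balls. A random homogeneous polynomial of order $p$ in $\xi\in\mathcal H^{\mathfrak c}$ with range in $\mathcal H^{\mathfrak s}_\alpha$ is $g(\xi,\omega)=\sum_{n\ge m+1}g_n(\xi,\omega)e_n$ with $g_n(\xi,\cdot)$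 measurable for each $\xi$ and $g_n(\cdot,\omega)$ a homogeneous polynomial of order $p$ in $\xi_1,\dots,\xi_m$ for each $\omega$. A leading-order Taylor approximation of order $k$ is such a random homogeneous polynomial of order $k$ satisfying the $o(\|\xi\|_\alpha^k)$ error estimate. *)

theory Defs
  imports "HOL-Analysis.Analysis" "HOL-Probability.Probability"
begin

text \<open>Modes are indexed from 0: the eigenvectors are
  e 0, e 1, ...; the critical modes are e 0, ..., e (m-1) (the paper's e_1..e_m),
  the stable modes are e n with n \<ge> m (the paper's n \<ge> m+1).\<close>

definition hilbert_basis :: "(nat \<Rightarrow> 'a::real_inner) \<Rightarrow> bool" where
  "hilbert_basis e \<longleftrightarrow>
     (\<forall>i j. inner (e i) (e j) = (if i = j then 1 else 0)) \<and>
     (\<forall>u. (\<lambda>n. inner u (e n) *\<^sub>R e n) sums u)"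

definition Hc :: "(nat \<Rightarrow> 'a::real_inner) \<Rightarrow> nat \<Rightarrow> 'a set" where
  "Hc e m = span (e ` {..<m})"

definition Ps :: "(nat \<Rightarrow> 'a::real_inner) \<Rightarrow> nat \<Rightarrow> 'a \<Rightarrow> 'a" where
  "Ps e m u = (\<Sum>n. if m \<le> n then inner u (e n) *\<^sub>R e n else 0)"

text \<open>The semigroup e^{tL} of the self-adjoint operator L with eigenpairs (beta n, e n),
  given by the spectral calculus.\<close>
definition sg :: "(nat \<Rightarrow> real) \<Rightarrow> (nat \<Rightarrow> 'a::real_inner) \<Rightarrow> real \<Rightarrow> 'a \<Rightarrow> 'a" where
  "sg \<beta> e t u = (\<Sum>n. (exp (\<beta> n * t) * inner u (e n)) *\<^sub>R e n)"

text \<open>Fractional power space H_alpha = D((c - L)^alpha) (c > sup of the spectrum) and its norm.\<close>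
definition in_Halpha :: "real \<Rightarrow> real \<Rightarrow> (nat \<Rightarrow> real) \<Rightarrow> (nat \<Rightarrow> 'a::real_inner) \<Rightarrow> 'a \<Rightarrow> bool" where
  "in_Halpha c \<alpha> \<beta> e u \<longleftrightarrow> summable (\<lambda>n. (c - \<beta> n) powr (2 * \<alpha>) * (inner u (e n))\<^sup>2)"

definition norm_alpha :: "real \<Rightarrow> real \<Rightarrow> (nat \<Rightarrow> real) \<Rightarrow> (nat \<Rightarrow> 'a::real_inner) \<Rightarrow> 'a \<Rightarrow> real" where
  "norm_alpha c \<alpha> \<beta> e u = sqrt (\<Sum>n. (c - \<beta> n) powr (2 * \<alpha>) * (inner u (e n))\<^sup>2)"

text \<open>Continuous k-linear map F_k : H_alpha^k \<rightarrow> H. A k-tuple is a function on {..<k}.\<close>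
definition cont_klinear ::
  "real \<Rightarrow> real \<Rightarrow> (nat \<Rightarrow> real) \<Rightarrow> (nat \<Rightarrow> 'a::real_inner) \<Rightarrow> nat \<Rightarrow> ((nat \<Rightarrow> 'a) \<Rightarrow> 'a) \<Rightarrow> bool" where
  "cont_klinear c \<alpha> \<beta> e k F \<longleftrightarrow>
     (\<forall>u v. (\<forall>j<k. u j = v j) \<longrightarrow> F u = F v) \<and>
     (\<forall>u j x y a b. (\<forall>i<k. in_Halpha c \<alpha> \<beta> e (u i)) \<and> j < k \<and>
        in_Halpha c \<alpha> \<beta> e x \<and> in_Halpha c \<alpha> \<beta> e y \<longrightarrow>
        F (u(j := a *\<^sub>R x + b *\<^sub>R y)) = a *\<^sub>R F (u(j := x)) + b *\<^sub>R F (u(j := y))) \<and>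
     (\<exists>C. \<forall>u. (\<forall>j<k. in_Halpha c \<alpha> \<beta> e (u j)) \<longrightarrow>
        norm (F u) \<le> C * (\<Prod>j<k. norm_alpha c \<alpha> \<beta> e (u j)))"

definition z_sigma :: "real \<Rightarrow> (real \<Rightarrow> 'o \<Rightarrow> real) \<Rightarrow> 'o \<Rightarrow> real" where
  "z_sigma \<sigma> W \<omega> = - \<sigma> * integral {..0} (\<lambda>\<tau>. exp \<tau> * W \<tau> \<omega>)"

definition hhat_app ::
  "nat \<Rightarrow> real \<Rightarrow> (nat \<Rightarrow> real) \<Rightarrow> (nat \<Rightarrow> 'a::real_inner) \<Rightarrow> nat \<Rightarrow> ((nat \<Rightarrow> 'a) \<Rightarrow> 'a)
     \<Rightarrow> (real \<Rightarrow> 'o \<Rightarrow> real) \<Rightarrow> 'a \<Rightarrow> 'o \<Rightarrow> 'a" where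
  "hhat_app k \<sigma> \<beta> e m F W \<xi> \<omega> =
     integral {..0} (\<lambda>s. exp (\<sigma> * (real k - 1) * W s \<omega>) *\<^sub>R
        sg \<beta> e (- s) (Ps e m (F (\<lambda>j. sg \<beta> e s \<xi>))))"

definition h_app ::
  "nat \<Rightarrow> real \<Rightarrow> (nat \<Rightarrow> real) \<Rightarrow> (nat \<Rightarrow> 'a::real_inner) \<Rightarrow> nat \<Rightarrow> ((nat \<Rightarrow> 'a) \<Rightarrow> 'a)
     \<Rightarrow> (real \<Rightarrow> 'o \<Rightarrow> real) \<Rightarrow> 'a \<Rightarrow> 'o \<Rightarrow> 'a" where
  "h_app k \<sigma> \<beta> e m F W \<xi> \<omega> =
     exp ((real k - 1) * z_sigma \<sigma> W \<omega>) *\<^sub>R hhat_app k \<sigma> \<beta> e m F W \<xi> \<omega>"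

definition M_coef ::
  "nat \<Rightarrow> real \<Rightarrow> (nat \<Rightarrow> real) \<Rightarrow> (real \<Rightarrow> 'o \<Rightarrow> real) \<Rightarrow> nat \<Rightarrow> (nat \<Rightarrow> nat) \<Rightarrow> 'o \<Rightarrow> real" where
  "M_coef k \<sigma> \<beta> W n i \<omega> =
     integral {..0} (\<lambda>s. exp (((\<Sum>j<k. \<beta> (i j)) - \<beta> n) * s + \<sigma> * (real k - 1) * W s \<omega>))"

definition hom_poly :: "nat \<Rightarrow> nat \<Rightarrow> ((nat \<Rightarrow> real) \<Rightarrow> real) \<Rightarrow> bool" where
  "hom_poly m p P \<longleftrightarrow>
     (\<exists>a. \<forall>x. P x = (\<Sum>\<gamma>\<in>{\<gamma>::nat \<Rightarrow> nat. (\<forall>i. m \<le> i \<longrightarrow> \<gamma> i = 0) \<and> sum \<gamma> {..<m} = p}.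
                       a \<gamma> * (\<Prod>i<m. x i ^ \<gamma> i)))"

definition random_hom_poly ::
  "'o measure \<Rightarrow> real \<Rightarrow> real \<Rightarrow> (nat \<Rightarrow> real) \<Rightarrow> (nat \<Rightarrow> 'a::real_inner) \<Rightarrow> nat \<Rightarrow> nat
     \<Rightarrow> ('a \<Rightarrow> 'o \<Rightarrow> 'a) \<Rightarrow> bool" where
  "random_hom_poly M c \<alpha> \<beta> e m p g \<longleftrightarrow>
     (\<exists>gn :: nat \<Rightarrow> 'a \<Rightarrow> 'o \<Rightarrow> real.
        (\<forall>\<xi>\<in>Hc e m. \<forall>\<omega>\<in>space M.
            (\<lambda>n. if m \<le> n then gn n \<xi> \<omega> *\<^sub>R e n else 0) sums g \<xi> \<omega> \<and>
            in_Halpha c \<alpha> \<beta> e (g \<xi> \<omega>)) \<and>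
        (\<forall>n\<ge>m. \<forall>\<xi>\<in>Hc e m. (\<lambda>\<omega>. gn n \<xi> \<omega>) \<in> borel_measurable M) \<and>
        (\<forall>n\<ge>m. \<forall>\<omega>\<in>space M. \<exists>P. hom_poly m p P \<and>
            (\<forall>\<xi>\<in>Hc e m. gn n \<xi> \<omega> = P (\<lambda>i. inner \<xi> (e i)))))"

definition small_error ::
  "'o measure \<Rightarrow> real \<Rightarrow> real \<Rightarrow> (nat \<Rightarrow> real) \<Rightarrow> (nat \<Rightarrow> 'a::real_inner) \<Rightarrow> nat \<Rightarrow> nat
     \<Rightarrow> ('a \<Rightarrow> 'o \<Rightarrow> 'a) \<Rightarrow> ('a \<Rightarrow> 'o \<Rightarrow> 'a) \<Rightarrow> bool" where
  "small_error M c \<alpha> \<beta> e m p h g \<longleftrightarrow>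
     (\<forall>\<omega>\<in>space M. \<forall>\<epsilon>>0. \<exists>\<delta>>0. \<forall>\<xi>\<in>Hc e m.
        norm_alpha c \<alpha> \<beta> e \<xi> < \<delta> \<longrightarrow>
        norm_alpha c \<alpha> \<beta> e (h \<xi> \<omega> - g \<xi> \<omega>) \<le> \<epsilon> * norm_alpha c \<alpha> \<beta> e \<xi> ^ p)"

definition leading_order_taylor ::
  "'o measure \<Rightarrow> real \<Rightarrow> real \<Rightarrow> (nat \<Rightarrow> real) \<Rightarrow> (nat \<Rightarrow> 'a::real_inner) \<Rightarrow> nat \<Rightarrow> nat
     \<Rightarrow> ('a \<Rightarrow> 'o \<Rightarrow> 'a) \<Rightarrow> ('a \<Rightarrow> 'o \<Rightarrow> 'a) \<Rightarrow> bool" where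
  "leading_order_taylor M c \<alpha> \<beta> e m k g h \<longleftrightarrow>
     random_hom_poly M c \<alpha> \<beta> e m k g \<and> small_error M c \<alpha> \<beta> e m k h g"

end

theory Submission
  imports Defs
begin

text \<open>
  On \<open>H\<^sup>c\<close> the semigroup acts diagonally, so by multilinearity
  \<open>F\<^sub>k(e\<^sup>s\<^sup>L\<xi>, \<dots>, e\<^sup>s\<^sup>L\<xi>)\<close> is a finite sum, over the multi-indices \<open>i\<close>, of
  \<open>\<xi>\<^sub>i\<^sub>1 \<cdots> \<xi>\<^sub>i\<^sub>k exp ((\<beta>\<^sub>i\<^sub>1 + \<dots> + \<beta>\<^sub>i\<^sub>k) s) F\<^sub>k(e\<^sub>i\<^sub>1, \<dots>, e\<^sub>i\<^sub>k)\<close>. Hence the \<open>n\<close>-th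
  coordinate of the integrand of \<open>hhat_app\<close> is a finite combination of the functions
  \<open>exp ((\<beta>\<^sub>i\<^sub>1 + \<dots> + \<beta>\<^sub>i\<^sub>k - \<beta>\<^sub>n) s + \<sigma> (k - 1) W\<^sub>s)\<close>, whose integrals are the \<open>M\<^sub>n\<close>.
  Exchanging integral and coordinate requires the vector-valued integral to exist: on \<open>\<Lambda>\<^sub>2\<^sub>k\<close>
  every such exponent has rate at least \<open>k \<eta>\<^sub>c - \<eta>\<^sub>s > 0\<close>, the sublinear growth of \<open>W\<close>
  costs at most half of it, and the finite-mode truncations of the integrand converge
  uniformly under an integrable exponential majorant. The same rates, at least \<open>k \<eta>\<^sub>c - \<beta>\<^sub>n\<close>,
  make the coordinates decay fast enough for \<open>H\<^sub>\<alpha>\<close> because \<open>\<alpha> < 1\<close>. Grouping equal monomials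
  gives a homogeneous polynomial of degree \<open>k\<close>, and measurability in \<open>\<omega>\<close> follows from the
  joint measurability of processes with continuous paths.
\<close>

section \<open>Completeness without the class \<open>banach\<close>\<close>

text \<open>The library's Cauchy criteria for series and integrals are stated for class \<open>banach\<close>,
  which a type of sort \<open>{real_inner, complete_space}\<close> is not known to belong to; we transfer
  them through an isometric copy of the type.\<close>

typedef (overloaded) ('a::real_normed_vector) banach_copy = "UNIV :: 'a set" by simp

setup_lifting type_definition_banach_copy

instantiation banach_copy :: (real_normed_vector) real_normed_vector
begin
lift_definition zero_banach_copy :: "'a banach_copy" is 0 .
lift_definition plus_banach_copy :: "'a banach_copy \<Rightarrow> 'a banach_copy \<Rightarrow> 'a banach_copy" is "(+)" .
lift_definition minus_banach_copy :: "'a banach_copy \<Rightarrow> 'a banach_copy \<Rightarrow> 'a banach_copy" is "(-)" .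
lift_definition uminus_banach_copy :: "'a banach_copy \<Rightarrow> 'a banach_copy" is uminus .
lift_definition scaleR_banach_copy :: "real \<Rightarrow> 'a banach_copy \<Rightarrow> 'a banach_copy" is scaleR .
lift_definition norm_banach_copy :: "'a banach_copy \<Rightarrow> real" is norm .
lift_definition sgn_banach_copy :: "'a banach_copy \<Rightarrow> 'a banach_copy" is sgn .
lift_definition dist_banach_copy :: "'a banach_copy \<Rightarrow> 'a banach_copy \<Rightarrow> real" is dist .
definition uniformity_banach_copy :: "('a banach_copy \<times> 'a banach_copy) filter" where
  "uniformity_banach_copy = (INF e\<in>{0<..}. principal {(x, y). dist x y < e})"
definition open_banach_copy :: "'a banach_copy set \<Rightarrow> bool" where
  "open_banach_copy U = (\<forall>x\<in>U. eventually (\<lambda>(x', y). x' = x \<longrightarrow> y \<in> U) uniformity)"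
instance
  by standard (transfer; simp add: algebra_simps dist_norm sgn_div_norm norm_triangle_ineq
      uniformity_banach_copy_def open_banach_copy_def)+
end

instance banach_copy :: ("{real_normed_vector, complete_space}") banach
proof
  fix X :: "nat \<Rightarrow> 'a banach_copy"
  assume "Cauchy X"
  then have "Cauchy (\<lambda>n. Rep_banach_copy (X n))"
    unfolding Cauchy_def by (simp add: dist_banach_copy.rep_eq)
  then obtain L where L: "(\<lambda>n. Rep_banach_copy (X n)) \<longlonglongrightarrow> L"
    using Cauchy_convergent_iff convergent_def by blast
  have "X \<longlonglongrightarrow> Abs_banach_copy L"
    using L unfolding tendsto_iff dist_banach_copy.rep_eq by (simp add: Abs_banach_copy_inverse)
  then show "convergent X"
    unfolding convergent_def by blast
qed

lemma bounded_linear_Rep_banach_copy: "bounded_linear Rep_banach_copy"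
  by (rule bounded_linear_intro[where K=1])
     (auto simp: plus_banach_copy.rep_eq scaleR_banach_copy.rep_eq norm_banach_copy.rep_eq)

lemma bounded_linear_Abs_banach_copy:
  "bounded_linear (Abs_banach_copy :: 'a::real_normed_vector \<Rightarrow> 'a banach_copy)"
  by (rule bounded_linear_intro[where K=1])
     (auto simp: plus_banach_copy.abs_eq scaleR_banach_copy.abs_eq norm_banach_copy.abs_eq
        eq_onp_same_args)

lemma norm_Abs_banach_copy: "norm (Abs_banach_copy x) = norm x"
  by (simp add: norm_banach_copy.abs_eq eq_onp_same_args)

lemma summable_Cauchy_complete:
  fixes f :: "nat \<Rightarrow> 'a::{real_normed_vector, complete_space}"
  assumes "\<And>r. r > 0 \<Longrightarrow> \<exists>N. \<forall>m\<ge>N. \<forall>n. norm (\<Sum>i=m..<n. f i) < r"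
  shows "summable f"
proof -
  have "(\<Sum>i=m..<n. Abs_banach_copy (f i)) = Abs_banach_copy (\<Sum>i=m..<n. f i)" for m n
    using linear_sum[OF bounded_linear.linear[OF bounded_linear_Abs_banach_copy]] by metis
  then have "summable (\<lambda>i. Abs_banach_copy (f i))"
    using assms by (simp add: summable_Cauchy norm_Abs_banach_copy)
  from bounded_linear.summable[OF bounded_linear_Rep_banach_copy this] show ?thesis
    by (simp add: Abs_banach_copy_inverse)
qed

lemma integrable_on_Abs_banach_copy_iff:
  fixes f :: "'n::euclidean_space \<Rightarrow> 'a::real_normed_vector"
  shows "(\<lambda>x. Abs_banach_copy (f x)) integrable_on S \<longleftrightarrow> f integrable_on S"
proof
  assume "(\<lambda>x. Abs_banach_copy (f x)) integrable_on S"
  from integrable_linear[OF this bounded_linear_Rep_banach_copy] show "f integrable_on S"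
    by (simp add: o_def Abs_banach_copy_inverse)
next
  assume "f integrable_on S"
  from integrable_linear[OF this bounded_linear_Abs_banach_copy]
  show "(\<lambda>x. Abs_banach_copy (f x)) integrable_on S"
    by (simp add: o_def)
qed

lemma integrable_on_atMost_uniform_approx:
  fixes f :: "real \<Rightarrow> 'a::{real_normed_vector, complete_space}" and G :: "real \<Rightarrow> real"
  assumes approx: "\<And>a b r. b \<le> 0 \<Longrightarrow> r > 0 \<Longrightarrow>
      \<exists>g. (\<forall>x\<in>{a..b}. norm (f x - g x) \<le> r) \<and> g integrable_on {a..b}"
    and bound: "\<And>x. x \<le> 0 \<Longrightarrow> norm (f x) \<le> G x"
    and G: "G integrable_on {..0}"
  shows "f integrable_on {..0}"
proof -
  let ?F = "\<lambda>x. Abs_banach_copy (f x)"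
  have "?F integrable_on {..0}"
  proof (rule integrable_on_all_intervals_integrable_bound[OF _ _ G])
    fix a b :: real
    have "?F integrable_on cbox a (min b 0)"
    proof (rule integrable_uniform_limit)
      fix r :: real
      assume "r > 0"
      then obtain g where g: "\<forall>x\<in>{a..min b 0}. norm (f x - g x) \<le> r" "g integrable_on {a..min b 0}"
        using approx[of "min b 0" r a] by auto
      have "?F x - Abs_banach_copy (g x) = Abs_banach_copy (f x - g x)" for x
        using linear_diff[OF bounded_linear.linear[OF bounded_linear_Abs_banach_copy]] by metis
      then show "\<exists>g. (\<forall>x\<in>cbox a (min b 0). norm (?F x - g x) \<le> r) \<and> g integrable_on cbox a (min b 0)"
        using g by (intro exI[of _ "\<lambda>x. Abs_banach_copy (g x)"])
          (simp add: norm_Abs_banach_copy integrable_on_Abs_banach_copy_iff)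
    qed
    moreover have "{..0} \<inter> cbox a b = cbox a (min b (0::real))"
      by auto
    ultimately show "(\<lambda>x. if x \<in> {..0} then ?F x else 0) integrable_on cbox a b"
      by (metis integrable_restrict_Int)
  qed (use bound in \<open>simp add: norm_Abs_banach_copy\<close>)
  then show ?thesis
    by (simp add: integrable_on_Abs_banach_copy_iff)
qed

section \<open>Hilbert bases and the space \<open>H\<^sub>\<alpha>\<close>\<close>

context
  fixes e :: "nat \<Rightarrow> 'a::real_inner"
  assumes e: "hilbert_basis e"
begin

lemma hilbert_basis_orthonormal: "inner (e i) (e j) = (if i = j then 1 else 0)"
  using e unfolding hilbert_basis_def by blast

lemma hilbert_basis_expansion: "(\<lambda>n. inner u (e n) *\<^sub>R e n) sums u"
  using e unfolding hilbert_basis_def by blast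

lemma norm_sum_basis_squared:
  assumes "finite A"
  shows "(norm (\<Sum>n\<in>A. a n *\<^sub>R e n))\<^sup>2 = (\<Sum>n\<in>A. (a n)\<^sup>2)"
proof -
  have "(norm (\<Sum>n\<in>A. a n *\<^sub>R e n))\<^sup>2 = inner (\<Sum>n\<in>A. a n *\<^sub>R e n) (\<Sum>n\<in>A. a n *\<^sub>R e n)"
    by (simp add: power2_norm_eq_inner)
  also have "\<dots> = (\<Sum>n\<in>A. (a n)\<^sup>2)"
    using assms by (simp add: inner_sum_left inner_sum_right hilbert_basis_orthonormal
        power2_eq_square if_distrib sum.delta' cong: if_cong)
  finally show ?thesis .
qed

lemma parseval: "(\<lambda>n. (inner u (e n))\<^sup>2) sums (norm u)\<^sup>2"
proof -
  have "(\<lambda>N. (norm (\<Sum>n<N. inner u (e n) *\<^sub>R e n))\<^sup>2) \<longlonglongrightarrow> (norm u)\<^sup>2"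
    using hilbert_basis_expansion[of u] unfolding sums_def by (intro tendsto_intros)
  then show ?thesis
    unfolding sums_def by (simp add: norm_sum_basis_squared)
qed

lemma summable_inner_basis_squared: "summable (\<lambda>n. (inner u (e n))\<^sup>2)"
  using parseval sums_summable by blast

lemma norm_squared_eq_suminf: "(norm u)\<^sup>2 = (\<Sum>n. (inner u (e n))\<^sup>2)"
  using parseval sums_unique by blast

lemma inner_Hc_basis_eq_0:
  assumes "\<xi> \<in> Hc e m" "m \<le> n"
  shows "inner \<xi> (e n) = 0"
  using assms(1) unfolding Hc_def
proof (induction rule: span_induct_alt)
  case (step a x y)
  then obtain l where "l < m" "x = e l"
    by auto
  with step assms(2) show ?case
    by (simp add: inner_add_left hilbert_basis_orthonormal)
qed simp

lemma sg_Hc: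
  assumes "\<xi> \<in> Hc e m"
  shows "sg \<beta> e t \<xi> = (\<Sum>l<m. (exp (\<beta> l * t) * inner \<xi> (e l)) *\<^sub>R e l)"
  unfolding sg_def by (rule suminf_finite) (use inner_Hc_basis_eq_0[OF assms] in auto)

lemma in_Halpha_basis: "in_Halpha c \<alpha> \<beta> e (e l)"
proof -
  have "(\<lambda>n. (c - \<beta> n) powr (2 * \<alpha>) * (inner (e l) (e n))\<^sup>2)
      = (\<lambda>n. if n = l then (c - \<beta> n) powr (2 * \<alpha>) else 0)"
    by (auto simp: hilbert_basis_orthonormal)
  then show ?thesis
    unfolding in_Halpha_def using sums_single sums_summable by metis
qed

end

context
  fixes e :: "nat \<Rightarrow> 'a::{real_inner, complete_space}"
  assumes e: "hilbert_basis e"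
begin

lemma summable_basis_series:
  assumes "summable (\<lambda>n. (a n)\<^sup>2)"
  shows "summable (\<lambda>n. a n *\<^sub>R e n)"
proof (rule summable_Cauchy_complete)
  fix r :: real
  assume "r > 0"
  then obtain N where N: "\<forall>m\<ge>N. \<forall>n. norm (\<Sum>i=m..<n. (a i)\<^sup>2) < r\<^sup>2"
    using assms[unfolded summable_Cauchy] by (meson zero_less_power)
  have "norm (\<Sum>i=m..<n. a i *\<^sub>R e i) < r" if "m \<ge> N" for m n
  proof (rule power2_less_imp_less)
    have "(norm (\<Sum>i=m..<n. a i *\<^sub>R e i))\<^sup>2 = (\<Sum>i=m..<n. (a i)\<^sup>2)"
      by (simp add: norm_sum_basis_squared[OF e])
    also have "\<dots> < r\<^sup>2"
      using N that by (metis abs_ge_self order.strict_trans1 real_norm_def)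
    finally show "(norm (\<Sum>i=m..<n. a i *\<^sub>R e i))\<^sup>2 < r\<^sup>2" .
  qed (use \<open>r > 0\<close> in simp)
  then show "\<exists>N. \<forall>m\<ge>N. \<forall>n. norm (\<Sum>i=m..<n. a i *\<^sub>R e i) < r"
    by blast
qed

lemma inner_basis_series:
  assumes "summable (\<lambda>n. (a n)\<^sup>2)"
  shows "inner (\<Sum>n. a n *\<^sub>R e n) (e j) = a j"
proof -
  have "(\<lambda>n. inner (a n *\<^sub>R e n) (e j)) sums inner (\<Sum>n. a n *\<^sub>R e n) (e j)"
    using summable_basis_series[OF assms]
    by (intro bounded_linear.sums[OF bounded_linear_inner_left] summable_sums)
  moreover have "(\<lambda>n. inner (a n *\<^sub>R e n) (e j)) = (\<lambda>n. if n = j then a n else 0)"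
    by (auto simp: hilbert_basis_orthonormal[OF e])
  ultimately show ?thesis
    using sums_single[of j a] sums_unique2 by metis
qed

lemma inner_Ps_basis: "inner (Ps e m u) (e n) = (if m \<le> n then inner u (e n) else 0)"
proof -
  have "summable (\<lambda>n. (if m \<le> n then inner u (e n) else 0)\<^sup>2)"
    by (rule summable_comparison_test'[OF summable_inner_basis_squared[OF e], where N=0]) auto
  moreover have "Ps e m u = (\<Sum>n. (if m \<le> n then inner u (e n) else 0) *\<^sub>R e n)"
    unfolding Ps_def by (intro arg_cong[where f=suminf] ext) auto
  ultimately show ?thesis
    by (simp add: inner_basis_series)
qed

text \<open>For \<open>t < 0\<close> the series defining \<open>sg\<close> may diverge, and then its value is junk.\<close>

lemma inner_sg_basis:
  assumes "\<And>n. \<beta> n \<le> b" and "t \<ge> 0"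
  shows "inner (sg \<beta> e t u) (e n) = exp (\<beta> n * t) * inner u (e n)"
  unfolding sg_def
proof (rule inner_basis_series)
  show "summable (\<lambda>n. (exp (\<beta> n * t) * inner u (e n))\<^sup>2)"
  proof (rule summable_comparison_test'[where N=0])
    show "summable (\<lambda>n. (exp (b * t))\<^sup>2 * (inner u (e n))\<^sup>2)"
      by (intro summable_mult summable_inner_basis_squared[OF e])
    fix n
    have "exp (\<beta> n * t) \<le> exp (b * t)"
      using assms by (simp add: mult_right_mono)
    then show "norm ((exp (\<beta> n * t) * inner u (e n))\<^sup>2) \<le> (exp (b * t))\<^sup>2 * (inner u (e n))\<^sup>2"
      by (simp add: power_mult_distrib mult_right_mono power_mono)
  qed
qed

end

lemma in_Halpha_0: "in_Halpha c \<alpha> \<beta> e 0"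
  unfolding in_Halpha_def by simp

lemma in_Halpha_lincomb:
  assumes "in_Halpha c \<alpha> \<beta> e x" "in_Halpha c \<alpha> \<beta> e y"
  shows "in_Halpha c \<alpha> \<beta> e (a *\<^sub>R x + b *\<^sub>R y)"
  unfolding in_Halpha_def
proof (rule summable_comparison_test'[where N=0])
  let ?w = "\<lambda>n. (c - \<beta> n) powr (2 * \<alpha>)"
  show "summable (\<lambda>n. 2 * a\<^sup>2 * (?w n * (inner x (e n))\<^sup>2) + 2 * b\<^sup>2 * (?w n * (inner y (e n))\<^sup>2))"
    using assms unfolding in_Halpha_def by (intro summable_add summable_mult)
  fix n
  let ?X = "inner x (e n)" and ?Y = "inner y (e n)"
  have "(a * ?X + b * ?Y)\<^sup>2 \<le> 2 * a\<^sup>2 * ?X\<^sup>2 + 2 * b\<^sup>2 * ?Y\<^sup>2"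
    using zero_le_power2[of "a * ?X - b * ?Y"]
    by (simp add: power2_sum power2_diff power_mult_distrib algebra_simps)
  from mult_left_mono[OF this, of "?w n"]
  show "norm (?w n * (inner (a *\<^sub>R x + b *\<^sub>R y) (e n))\<^sup>2)
      \<le> 2 * a\<^sup>2 * (?w n * (inner x (e n))\<^sup>2) + 2 * b\<^sup>2 * (?w n * (inner y (e n))\<^sup>2)"
    by (simp add: inner_add_left algebra_simps)
qed

lemma in_Halpha_sum:
  assumes "finite L" "\<And>l. l \<in> L \<Longrightarrow> in_Halpha c \<alpha> \<beta> e (y l)"
  shows "in_Halpha c \<alpha> \<beta> e (\<Sum>l\<in>L. a l *\<^sub>R y l)"
  using assms
proof (induction L rule: finite_induct)
  case (insert l L)
  then show ?case
    using in_Halpha_lincomb[of c \<alpha> \<beta> e "y l" "\<Sum>l\<in>L. a l *\<^sub>R y l" "a l" 1] by simp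
qed (simp add: in_Halpha_0)

section \<open>Continuous multilinear maps on the critical modes\<close>

lemma cont_klinear_cong:
  assumes "cont_klinear c \<alpha> \<beta> e k F" "\<And>j. j < k \<Longrightarrow> u j = v j"
  shows "F u = F v"
  using assms unfolding cont_klinear_def by blast

lemma cont_klinear_linear:
  assumes "cont_klinear c \<alpha> \<beta> e k F" "\<And>i. i < k \<Longrightarrow> in_Halpha c \<alpha> \<beta> e (u i)" "j < k"
    "in_Halpha c \<alpha> \<beta> e x" "in_Halpha c \<alpha> \<beta> e y"
  shows "F (u(j := a *\<^sub>R x + b *\<^sub>R y)) = a *\<^sub>R F (u(j := x)) + b *\<^sub>R F (u(j := y))"
  using assms unfolding cont_klinear_def by blast

lemma cont_klinear_slot_sum:
  assumes F: "cont_klinear c \<alpha> \<beta> e k F" and u: "\<And>i. i < k \<Longrightarrow> in_Halpha c \<alpha> \<beta> e (u i)"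
    and j: "j < k" and L: "finite L" and y: "\<And>l. l \<in> L \<Longrightarrow> in_Halpha c \<alpha> \<beta> e (y l)"
  shows "F (u(j := \<Sum>l\<in>L. a l *\<^sub>R y l)) = (\<Sum>l\<in>L. a l *\<^sub>R F (u(j := y l)))"
  using L y
proof (induction L rule: finite_induct)
  case empty
  have "F (u(j := 0 *\<^sub>R 0 + 0 *\<^sub>R 0)) = 0 *\<^sub>R F (u(j := 0)) + 0 *\<^sub>R F (u(j := 0))"
    by (rule cont_klinear_linear[OF F u j in_Halpha_0 in_Halpha_0])
  then show ?case
    by (simp del: fun_upd_apply)
next
  case (insert l L)
  have "in_Halpha c \<alpha> \<beta> e (\<Sum>l\<in>L. a l *\<^sub>R y l)"
    using insert by (intro in_Halpha_sum) auto
  with insert have "F (u(j := a l *\<^sub>R y l + 1 *\<^sub>R (\<Sum>l\<in>L. a l *\<^sub>R y l))) =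
      a l *\<^sub>R F (u(j := y l)) + 1 *\<^sub>R F (u(j := \<Sum>l\<in>L. a l *\<^sub>R y l))"
    by (intro cont_klinear_linear[OF F u j]) auto
  with insert show ?case
    by (simp del: fun_upd_apply)
qed

lemma sum_PiE_lessThan_Suc:
  "(\<Sum>i\<in>{..<p} \<rightarrow>\<^sub>E A. \<Sum>l\<in>A. G (i(p := l))) = (\<Sum>i\<in>{..<Suc p} \<rightarrow>\<^sub>E A. G i)"
proof -
  have "(\<Sum>i\<in>{..<p} \<rightarrow>\<^sub>E A. \<Sum>l\<in>A. G (i(p := l))) = (\<Sum>(i, l)\<in>({..<p} \<rightarrow>\<^sub>E A) \<times> A. G (i(p := l)))"
    by (rule sum.cartesian_product)
  also have "\<dots> = (\<Sum>i\<in>{..<Suc p} \<rightarrow>\<^sub>E A. G i)"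
    by (rule sum.reindex_bij_witness[of _ "\<lambda>i. (i(p := undefined), i p)" "\<lambda>(i, l). i(p := l)"])
       (auto simp: PiE_def extensional_def lessThan_Suc)
  finally show ?thesis .
qed

lemma cont_klinear_expand_prefix:
  fixes a :: "nat \<Rightarrow> nat \<Rightarrow> real" and m :: nat
  assumes F: "cont_klinear c \<alpha> \<beta> e k F" and e: "hilbert_basis e" and p: "p \<le> k"
  defines "V \<equiv> \<lambda>j. \<Sum>l<m. a j l *\<^sub>R e l"
  shows "F V = (\<Sum>i\<in>{..<p} \<rightarrow>\<^sub>E {..<m}.
      (\<Prod>j<p. a j (i j)) *\<^sub>R F (\<lambda>j. if j < p then e (i j) else V j))"
  using p
proof (induction p)
  case (Suc p)
  then have IH: "F V = (\<Sum>i\<in>{..<p} \<rightarrow>\<^sub>E {..<m}.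
      (\<Prod>j<p. a j (i j)) *\<^sub>R F (\<lambda>j. if j < p then e (i j) else V j))" and "p < k"
    by auto
  have V: "in_Halpha c \<alpha> \<beta> e (V j)" for j
    unfolding V_def by (intro in_Halpha_sum in_Halpha_basis[OF e]) auto
  have expand_slot: "F (\<lambda>j. if j < p then e (i j) else V j) =
      (\<Sum>l<m. a p l *\<^sub>R F (\<lambda>j. if j < Suc p then e ((i(p := l)) j) else V j))" for i
  proof -
    let ?u = "\<lambda>j. if j < p then e (i j) else V j"
    have "?u = ?u(p := \<Sum>l<m. a p l *\<^sub>R e l)"
      by (auto simp: V_def)
    then have "F ?u = F (?u(p := \<Sum>l<m. a p l *\<^sub>R e l))"
      by simp
    also have "\<dots> = (\<Sum>l<m. a p l *\<^sub>R F (?u(p := e l)))"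
      using V in_Halpha_basis[OF e] \<open>p < k\<close> by (intro cont_klinear_slot_sum[OF F]) auto
    also have "\<dots> = (\<Sum>l<m. a p l *\<^sub>R F (\<lambda>j. if j < Suc p then e ((i(p := l)) j) else V j))"
      by (intro sum.cong refl arg_cong[where f="\<lambda>x. _ *\<^sub>R x"] arg_cong[where f=F]) auto
    finally show ?thesis .
  qed
  let ?G = "\<lambda>i. (\<Prod>j<Suc p. a j (i j)) *\<^sub>R F (\<lambda>j. if j < Suc p then e (i j) else V j)"
  have "F V = (\<Sum>i\<in>{..<p} \<rightarrow>\<^sub>E {..<m}. \<Sum>l\<in>{..<m}. ?G (i(p := l)))"
    unfolding IH expand_slot
  proof (intro sum.cong refl)
    fix i
    assume "i \<in> {..<p} \<rightarrow>\<^sub>E {..<m}"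
    have "(\<Prod>j<Suc p. a j ((i(p := l)) j)) = a p l * (\<Prod>j<p. a j (i j))" for l
      by (simp add: lessThan_Suc)
    then show "(\<Prod>j<p. a j (i j)) *\<^sub>R
        (\<Sum>l<m. a p l *\<^sub>R F (\<lambda>j. if j < Suc p then e ((i(p := l)) j) else V j))
        = (\<Sum>l\<in>{..<m}. ?G (i(p := l)))"
      by (simp add: scaleR_sum_right mult.commute)
  qed
  with sum_PiE_lessThan_Suc[where p = p and A = "{..<m}" and G = ?G] show ?case
    by simp
qed simp

lemma cont_klinear_expand:
  assumes F: "cont_klinear c \<alpha> \<beta> e k F" and e: "hilbert_basis e"
  shows "F (\<lambda>j. \<Sum>l<m. a j l *\<^sub>R e l) =
     (\<Sum>i\<in>{..<k} \<rightarrow>\<^sub>E {..<m}. (\<Prod>j<k. a j (i j)) *\<^sub>R F (\<lambda>j. e (i j)))"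
proof -
  have "F (\<lambda>j. \<Sum>l<m. a j l *\<^sub>R e l) = (\<Sum>i\<in>{..<k} \<rightarrow>\<^sub>E {..<m}. (\<Prod>j<k. a j (i j)) *\<^sub>R
      F (\<lambda>j. if j < k then e (i j) else \<Sum>l<m. a j l *\<^sub>R e l))"
    by (rule cont_klinear_expand_prefix[OF F e order_refl])
  also have "\<dots> = (\<Sum>i\<in>{..<k} \<rightarrow>\<^sub>E {..<m}. (\<Prod>j<k. a j (i j)) *\<^sub>R F (\<lambda>j. e (i j)))"
    by (intro sum.cong refl arg_cong[where f="\<lambda>x. _ *\<^sub>R x"] cont_klinear_cong[OF F]) auto
  finally show ?thesis .
qed

lemma finite_exponent_vectors:
  "finite {\<gamma>::nat \<Rightarrow> nat. (\<forall>i. m \<le> i \<longrightarrow> \<gamma> i = 0) \<and> sum \<gamma> {..<m} = k}" (is "finite ?G")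
proof (rule finite_subset)
  show "?G \<subseteq> (\<lambda>f l. if l < m then f l else 0) ` ({..<m} \<rightarrow>\<^sub>E {..k})"
  proof
    fix \<gamma>
    assume \<gamma>: "\<gamma> \<in> ?G"
    have "\<gamma> l \<le> k" if "l < m" for l
      using \<gamma> member_le_sum[of l "{..<m}" \<gamma>] that by auto
    with \<gamma> show "\<gamma> \<in> (\<lambda>f l. if l < m then f l else 0) ` ({..<m} \<rightarrow>\<^sub>E {..k})"
      by (intro image_eqI[where x="restrict \<gamma> {..<m}"]) (auto simp: fun_eq_iff)
  qed
qed (simp add: finite_PiE)

lemma hom_poly_multiindex_sum:
  fixes a :: "(nat \<Rightarrow> nat) \<Rightarrow> real"
  shows "hom_poly m k (\<lambda>x. \<Sum>i\<in>{..<k} \<rightarrow>\<^sub>E {..<m}. (\<Prod>j<k. x (i j)) * a i)"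
proof -
  let ?E = "{..<k} \<rightarrow>\<^sub>E {..<m}"
  let ?G = "{\<gamma>::nat \<Rightarrow> nat. (\<forall>i. m \<le> i \<longrightarrow> \<gamma> i = 0) \<and> sum \<gamma> {..<m} = k}"
  define cnt where "cnt i l = (if l < m then card {j\<in>{..<k}. i j = l} else 0)" for i l
  have cnt_in_G: "cnt i \<in> ?G" if "i \<in> ?E" for i
  proof -
    have "sum (cnt i) {..<m} = (\<Sum>l<m. \<Sum>j\<in>{j\<in>{..<k}. i j = l}. 1)"
      by (simp add: cnt_def)
    also have "\<dots> = (\<Sum>j<k. (1::nat))"
      by (rule sum.group) (use that in auto)
    finally show ?thesis
      by (auto simp: cnt_def)
  qed
  have monomial: "(\<Prod>j<k. x (i j)) = (\<Prod>l<m. x l ^ cnt i l)" if "i \<in> ?E" for i and x :: "nat \<Rightarrow> real"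
  proof -
    have "(\<Prod>j<k. x (i j)) = (\<Prod>l<m. \<Prod>j\<in>{j\<in>{..<k}. i j = l}. x (i j))"
      by (rule prod.group[symmetric]) (use that in auto)
    also have "\<dots> = (\<Prod>l<m. x l ^ cnt i l)"
      by (intro prod.cong refl) (auto simp: cnt_def)
    finally show ?thesis .
  qed
  have grouped: "(\<Sum>i\<in>?E. (\<Prod>j<k. x (i j)) * a i) =
      (\<Sum>\<gamma>\<in>?G. (\<Sum>i\<in>{i\<in>?E. cnt i = \<gamma>}. a i) * (\<Prod>l<m. x l ^ \<gamma> l))" for x
  proof -
    have "(\<Sum>i\<in>?E. (\<Prod>j<k. x (i j)) * a i) = (\<Sum>i\<in>?E. (\<Prod>l<m. x l ^ cnt i l) * a i)"
      using monomial by (intro sum.cong) auto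
    also have "\<dots> = (\<Sum>\<gamma>\<in>?G. \<Sum>i\<in>{i\<in>?E. cnt i = \<gamma>}. (\<Prod>l<m. x l ^ cnt i l) * a i)"
      by (rule sum.group[symmetric, OF finite_PiE finite_exponent_vectors]) (use cnt_in_G in auto)
    also have "\<dots> = (\<Sum>\<gamma>\<in>?G. (\<Sum>i\<in>{i\<in>?E. cnt i = \<gamma>}. a i) * (\<Prod>l<m. x l ^ \<gamma> l))"
      unfolding sum_distrib_right by (intro sum.cong refl) (auto simp: mult.commute)
    finally show ?thesis .
  qed
  show ?thesis
    unfolding hom_poly_def by (intro exI[of _ "\<lambda>\<gamma>. \<Sum>i\<in>{i\<in>?E. cnt i = \<gamma>}. a i"] allI grouped)
qed

section \<open>Real analysis of the noise factor\<close>

lemma sublinear_growth_bound: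
  fixes w :: "real \<Rightarrow> real"
  assumes cont: "continuous_on UNIV w" and lim: "((\<lambda>t. w t / t) \<longlongrightarrow> 0) at_bot" and eps: "\<epsilon> > 0"
  shows "\<exists>C\<ge>0. \<forall>s\<le>0. \<bar>w s\<bar> \<le> C + \<epsilon> * (- s)"
proof -
  have "eventually (\<lambda>t. \<bar>w t / t\<bar> < \<epsilon>) at_bot"
    using lim eps by (simp add: tendsto_iff dist_real_def)
  then obtain T0 where T0: "\<And>t. t \<le> T0 \<Longrightarrow> \<bar>w t / t\<bar> < \<epsilon>"
    by (auto simp: eventually_at_bot_linorder)
  define T where "T = min T0 (-1)"
  have T: "\<And>t. t \<le> T \<Longrightarrow> \<bar>w t / t\<bar> < \<epsilon>" by (rule T0) (simp add: T_def)
  have T': "T < 0" by (simp add: T_def)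
  have "compact (w ` {T..0})"
    by (rule compact_continuous_image) (auto intro: continuous_on_subset[OF cont])
  then have "bounded (w ` {T..0})" by (rule compact_imp_bounded)
  then obtain B where B: "\<And>x. x \<in> w ` {T..0} \<Longrightarrow> norm x \<le> B"
    unfolding bounded_iff by blast
  define C where "C = max B 0"
  show ?thesis
  proof (intro exI[of _ C] conjI allI impI)
    show "C \<ge> 0" by (simp add: C_def)
    fix s :: real assume s: "s \<le> 0"
    show "\<bar>w s\<bar> \<le> C + \<epsilon> * (- s)"
    proof (cases "s \<le> T")
      case True
      then have "s < 0" using T' by auto
      have "\<bar>w s\<bar> = \<bar>w s / s\<bar> * (-s)" using \<open>s < 0\<close> by (simp add: abs_divide)
      also have "\<dots> < \<epsilon> * (-s)"
        by (rule mult_strict_right_mono[OF T(1)[OF True]]) (use \<open>s < 0\<close> in simp)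
      finally show ?thesis using \<open>s < 0\<close> by (simp add: C_def)
    next
      case False
      then have "\<bar>w s\<bar> \<le> B" using B[of "w s"] s by auto
      moreover have "\<epsilon> * (- s) \<ge> 0" using s eps by (simp add: mult_le_0_iff)
      moreover have "B \<le> C" by (simp add: C_def)
      ultimately show ?thesis by linarith
    qed
  qed
qed

lemma exp_integral_atMost_0:
  fixes q :: real
  assumes q: "q > 0"
  shows "(\<lambda>s. exp (q * s)) absolutely_integrable_on {..0}"
        "((\<lambda>s. exp (q * s)) has_integral 1 / q) {..0}"
proof -
  have h: "((\<lambda>x. exp (-q*x)) has_integral exp (-q*0)/q) {0..}"
    by (rule has_integral_exp_minus_to_infinity[OF q])
  have ai: "(\<lambda>x. exp (-q*x)) absolutely_integrable_on {0..}"
    by (rule nonnegative_absolutely_integrable_1) (use h in \<open>auto simp: integrable_on_def\<close>)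
  have "(\<lambda>x. (\<lambda>x. exp (-q*x)) (-x)) absolutely_integrable_on {..0} \<and>
        integral {..0} (\<lambda>x. (\<lambda>x. exp (-q*x)) (-x)) = 1 / q"
    by (subst has_absolute_integral_reflect_real[where B="{0..}"])
       (use ai h in \<open>auto simp: integral_unique image_def\<close>)
  then have *: "(\<lambda>s. exp (q * s)) absolutely_integrable_on {..0}" "integral {..0} (\<lambda>s. exp (q * s)) = 1 / q"
    by auto
  show "(\<lambda>s. exp (q * s)) absolutely_integrable_on {..0}" by (fact *)
  show "((\<lambda>s. exp (q * s)) has_integral 1 / q) {..0}"
    using set_lebesgue_integral_eq_integral(1)[OF *(1)] *(2) by (metis has_integral_integral)
qed

lemma integrable_exp_dominated:
  fixes \<phi> :: "real \<Rightarrow> real"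
  assumes cont: "continuous_on UNIV \<phi>" and q: "q > 0"
    and bound: "\<And>s. s \<le> 0 \<Longrightarrow> \<bar>\<phi> s\<bar> \<le> A * exp (q * s)"
  shows "\<phi> absolutely_integrable_on {..0}" "\<phi> integrable_on {..0}"
    "\<bar>integral {..0} \<phi>\<bar> \<le> A / q"
    "set_integrable lborel {..0} \<phi>"
proof -
  have g: "((\<lambda>s. A * exp (q * s)) has_integral A * (1 / q)) {..0}"
    using has_integral_mult_right[OF exp_integral_atMost_0(2)[OF q]] .
  have meas: "\<phi> \<in> borel_measurable (lebesgue_on {..0})"
    by (rule continuous_imp_measurable_on_sets_lebesgue) (auto intro: continuous_on_subset[OF cont])
  show int: "\<phi> integrable_on {..0}"
    by (rule measurable_bounded_by_integrable_imp_integrable_real[OF meas _ bound])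
       (use g in \<open>auto simp: integrable_on_def\<close>)
  show ai: "\<phi> absolutely_integrable_on {..0}"
    by (rule absolutely_integrable_integrable_bound[OF _ int, where g="\<lambda>s. A * exp (q * s)"])
       (use bound g in \<open>auto simp: integrable_on_def\<close>)
  have "norm (integral {..0} \<phi>) \<le> integral {..0} (\<lambda>s. A * exp (q * s))"
    by (rule integral_norm_bound_integral[OF int]) (use bound g in \<open>auto simp: integrable_on_def\<close>)
  moreover have "integral {..0} (\<lambda>s. A * exp (q * s)) = A / q"
    using integral_unique[OF g] by simp
  ultimately show "\<bar>integral {..0} \<phi>\<bar> \<le> A / q" by (metis real_norm_def)
  have bm: "(\<lambda>x. indicator {..0::real} x *\<^sub>R \<phi> x) \<in> borel_measurable lborel"
    using borel_measurable_continuous_onI[OF cont] by measurable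
  show "set_integrable lborel {..0} \<phi>"
    unfolding set_integrable_def using integrable_completion[OF bm] ai[unfolded set_integrable_def] by blast
qed

lemma floor_grid_LIMSEQ: "(\<lambda>n. real_of_int \<lfloor>real (Suc n) * x\<rfloor> / real (Suc n)) \<longlonglongrightarrow> x"
proof (rule tendsto_sandwich[where f="\<lambda>n. x - 1 / real (Suc n)" and h="\<lambda>n. x"])
  have "(real (Suc n) * x - 1) / real (Suc n) \<le> real_of_int \<lfloor>real (Suc n) * x\<rfloor> / real (Suc n)"
    "real_of_int \<lfloor>real (Suc n) * x\<rfloor> / real (Suc n) \<le> real (Suc n) * x / real (Suc n)" for n
    by (intro divide_right_mono; linarith)+
  then show "\<forall>\<^sub>F n in sequentially. x - 1 / real (Suc n) \<le> real_of_int \<lfloor>real (Suc n) * x\<rfloor> / real (Suc n)"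
    "\<forall>\<^sub>F n in sequentially. real_of_int \<lfloor>real (Suc n) * x\<rfloor> / real (Suc n) \<le> x"
    by (simp_all add: diff_divide_distrib)
  show "(\<lambda>n. x - 1 / real (Suc n)) \<longlonglongrightarrow> x"
    using tendsto_diff[OF tendsto_const LIMSEQ_inverse_real_of_nat, of x] by (simp add: inverse_eq_divide)
qed simp

text \<open>Pointwise limit of the piecewise constant interpolations on the grids \<open>\<int> / (n + 1)\<close>.\<close>

lemma borel_measurable_continuous_process:
  fixes W :: "real \<Rightarrow> 'o \<Rightarrow> real"
  assumes W_meas: "\<And>t. W t \<in> borel_measurable M"
    and W_cont: "\<And>\<omega>. \<omega> \<in> space M \<Longrightarrow> continuous_on UNIV (\<lambda>t. W t \<omega>)"
  shows "(\<lambda>p. W (snd p) (fst p)) \<in> borel_measurable (M \<Otimes>\<^sub>M lborel)"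
proof (rule borel_measurable_LIMSEQ_metric)
  fix n
  have "(\<lambda>p. W (real_of_int i / real (Suc n)) (fst p)) \<in> borel_measurable (M \<Otimes>\<^sub>M lborel)" for i
    using W_meas by measurable
  moreover have "(\<lambda>p. \<lfloor>real (Suc n) * snd p\<rfloor>) \<in> measurable (M \<Otimes>\<^sub>M lborel) (count_space UNIV)"
    by measurable
  ultimately show "(\<lambda>p. W (real_of_int \<lfloor>real (Suc n) * snd p\<rfloor> / real (Suc n)) (fst p))
      \<in> borel_measurable (M \<Otimes>\<^sub>M lborel)"
    by (rule measurable_compose_countable)
next
  fix p :: "'o \<times> real"
  assume "p \<in> space (M \<Otimes>\<^sub>M lborel)"
  then have "fst p \<in> space M"
    by (auto simp: space_pair_measure)
  then have "isCont (\<lambda>t. W t (fst p)) (snd p)"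
    using W_cont by (simp add: continuous_on_eq_continuous_at)
  then show "(\<lambda>n. W (real_of_int \<lfloor>real (Suc n) * snd p\<rfloor> / real (Suc n)) (fst p)) \<longlonglongrightarrow> W (snd p) (fst p)"
    using isCont_tendsto_compose floor_grid_LIMSEQ by blast
qed

lemma borel_measurable_process_integral:
  fixes W :: "real \<Rightarrow> 'o \<Rightarrow> real" and \<Phi> :: "real \<Rightarrow> real \<Rightarrow> real"
  assumes W_meas: "\<And>t. W t \<in> borel_measurable M"
    and W_cont: "\<And>\<omega>. \<omega> \<in> space M \<Longrightarrow> continuous_on UNIV (\<lambda>t. W t \<omega>)"
    and \<Phi>: "continuous_on UNIV (\<lambda>p. \<Phi> (fst p) (snd p))"
    and int: "\<And>\<omega>. \<omega> \<in> space M \<Longrightarrow> set_integrable lborel {..0} (\<lambda>s. \<Phi> s (W s \<omega>))"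
  shows "(\<lambda>\<omega>. integral {..0} (\<lambda>s. \<Phi> s (W s \<omega>))) \<in> borel_measurable M"
proof -
  note [measurable] = borel_measurable_continuous_process[OF W_meas W_cont]
  have "(\<lambda>p. (snd p, W (snd p) (fst p))) \<in> borel_measurable (M \<Otimes>\<^sub>M lborel)"
    by measurable
  from measurable_compose[OF this borel_measurable_continuous_onI[OF \<Phi>]]
  have [measurable]: "(\<lambda>p. \<Phi> (snd p) (W (snd p) (fst p))) \<in> borel_measurable (M \<Otimes>\<^sub>M lborel)"
    by simp
  have "(\<lambda>p. indicator {..0::real} (snd p) *\<^sub>R \<Phi> (snd p) (W (snd p) (fst p)))
      \<in> borel_measurable (M \<Otimes>\<^sub>M lborel)"
    by measurable
  then have "(\<lambda>\<omega>. \<integral>s. indicator {..0::real} s *\<^sub>R \<Phi> s (W s \<omega>) \<partial>lborel) \<in> borel_measurable M"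
    using lborel.borel_measurable_lebesgue_integral[of "\<lambda>\<omega> s. indicator {..0::real} s *\<^sub>R \<Phi> s (W s \<omega>)" M]
    by (simp add: case_prod_beta)
  moreover have "(\<integral>s. indicator {..0::real} s *\<^sub>R \<Phi> s (W s \<omega>) \<partial>lborel) = integral {..0} (\<lambda>s. \<Phi> s (W s \<omega>))"
    if "\<omega> \<in> space M" for \<omega>
    using set_borel_integral_eq_integral(2)[OF int[OF that]] by (simp add: set_lebesgue_integral_def)
  ultimately show ?thesis
    by (rule measurable_cong[THEN iffD1, rotated])
qed

lemma borel_measurable_z_sigma:
  fixes W :: "real \<Rightarrow> 'o \<Rightarrow> real"
  assumes W_meas: "\<And>t. W t \<in> borel_measurable M"
    and W_cont: "\<And>\<omega>. \<omega> \<in> space M \<Longrightarrow> continuous_on UNIV (\<lambda>t. W t \<omega>)"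
    and W_sublin: "\<And>\<omega>. \<omega> \<in> space M \<Longrightarrow> ((\<lambda>t. W t \<omega> / t) \<longlongrightarrow> 0) at_bot"
  shows "z_sigma \<sigma> W \<in> borel_measurable M"
proof -
  have "(\<lambda>\<omega>. integral {..0} (\<lambda>\<tau>. exp \<tau> * W \<tau> \<omega>)) \<in> borel_measurable M"
  proof (rule borel_measurable_process_integral[where \<Phi>="\<lambda>s x. exp s * x", OF W_meas W_cont])
    show "continuous_on UNIV (\<lambda>p::real \<times> real. exp (fst p) * snd p)"
      by (intro continuous_intros)
    fix \<omega>
    assume \<omega>: "\<omega> \<in> space M"
    obtain C where C: "C \<ge> 0" "\<And>s. s \<le> 0 \<Longrightarrow> \<bar>W s \<omega>\<bar> \<le> C + 1 * (- s)"
      using sublinear_growth_bound[OF W_cont[OF \<omega>] W_sublin[OF \<omega>], of 1] by auto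
    have bound: "\<bar>exp \<tau> * W \<tau> \<omega>\<bar> \<le> (C + 2) * exp (1 / 2 * \<tau>)" if "\<tau> \<le> 0" for \<tau>
    proof -
      have "- \<tau> / 2 \<le> exp (- \<tau> / 2)"
        using exp_ge_add_one_self[of "- \<tau> / 2"] by simp
      then have "(- \<tau>) * exp \<tau> \<le> 2 * exp (- \<tau> / 2) * exp \<tau>"
        by (intro mult_right_mono) auto
      also have "\<dots> = 2 * exp (1 / 2 * \<tau>)"
        by (simp add: mult_exp_exp)
      finally have "(- \<tau>) * exp \<tau> \<le> 2 * exp (1 / 2 * \<tau>)" .
      moreover have "exp \<tau> \<le> exp (1 / 2 * \<tau>)"
        using that by simp
      ultimately have "exp \<tau> * (C + (- \<tau>)) \<le> (C + 2) * exp (1 / 2 * \<tau>)"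
        using mult_left_mono[of "exp \<tau>" "exp (1 / 2 * \<tau>)" C] C(1) by (simp add: algebra_simps)
      moreover have "\<bar>exp \<tau> * W \<tau> \<omega>\<bar> \<le> exp \<tau> * (C + (- \<tau>))"
        using C(2)[OF that] by (simp add: abs_mult mult_left_mono)
      ultimately show ?thesis
        by linarith
    qed
    have "continuous_on UNIV (\<lambda>\<tau>. exp \<tau> * W \<tau> \<omega>)"
      using W_cont[OF \<omega>] by (intro continuous_intros)
    from integrable_exp_dominated(4)[OF this _ bound]
    show "set_integrable lborel {..0} (\<lambda>\<tau>. exp \<tau> * W \<tau> \<omega>)"
      by simp
  qed
  then show ?thesis
    unfolding z_sigma_def by simp
qed

lemma powr_le_shifted_square:
  fixes x D d \<alpha> :: real
  assumes D: "D \<ge> 0" and d: "d > 0" and xD: "x - D \<ge> d" and \<alpha>: "0 \<le> \<alpha>" "\<alpha> < 1"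
  shows "x powr (2 * \<alpha>) \<le> (((D + d) / d)\<^sup>2 + 1 / d\<^sup>2) * (x - D)\<^sup>2"
proof -
  have x: "x > 0"
    using D d xD by linarith
  have "x * d \<le> (D + d) * (x - D)"
    using mult_left_mono[OF xD D] by (simp add: algebra_simps)
  then have x_le: "x \<le> (D + d) / d * (x - D)"
    using d by (simp add: field_simps)
  show ?thesis
  proof (cases "x \<ge> 1")
    case True
    have "x powr (2 * \<alpha>) \<le> x\<^sup>2"
      using powr_mono[of "2 * \<alpha>" 2 x] True \<alpha> x by simp
    also have "\<dots> \<le> ((D + d) / d * (x - D))\<^sup>2"
      by (rule power_mono[OF x_le]) (use x in simp)
    also have "\<dots> = ((D + d) / d)\<^sup>2 * (x - D)\<^sup>2"
      by (simp only: power_mult_distrib)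
    finally show ?thesis
      by (simp add: distrib_right add_increasing2)
  next
    case False
    have "x powr (2 * \<alpha>) \<le> 1"
      by (rule powr_le1) (use False x \<alpha> in auto)
    also have "1 \<le> 1 / d\<^sup>2 * (x - D)\<^sup>2"
      using power_mono[OF xD, of 2] d by (simp add: field_simps)
    finally show ?thesis
      by (simp add: distrib_right add_increasing)
  qed
qed

lemma summable_tail_less:
  fixes w :: "nat \<Rightarrow> real"
  assumes "summable w" "r > 0"
  shows "\<exists>N. (\<Sum>n. if N \<le> n then w n else 0) < r"
proof -
  obtain N where N: "norm (\<Sum>i. w (i + N)) < r"
    using suminf_exist_split[OF assms(2,1)] by blast
  have "(\<lambda>i. w (i + N)) sums (\<Sum>i. w (i + N))"
    using assms(1) by (simp add: summable_iff_shift summable_sums)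
  then have "(\<lambda>n. if N \<le> n then w n else 0) sums (\<Sum>i. w (i + N))"
    by (subst sums_zero_iff_shift[symmetric, of N]) auto
  with N show ?thesis
    by (metis real_norm_def abs_ge_self order.strict_trans1 sums_unique)
qed

section \<open>The approximating integrals\<close>

locale leading_order_setting =
  fixes e :: "nat \<Rightarrow> 'a::{real_inner, complete_space}" and \<beta> :: "nat \<Rightarrow> real" and m k :: nat
    and \<alpha> c \<sigma> \<eta>c \<eta>s :: real and Fk :: "(nat \<Rightarrow> 'a) \<Rightarrow> 'a" and M :: "'o measure"
    and W :: "real \<Rightarrow> 'o \<Rightarrow> real"
  assumes basis: "hilbert_basis e"
    and beta_mono: "\<And>n. \<beta> (Suc n) \<le> \<beta> n"
    and m_pos: "1 \<le> m" and k_ge: "2 \<le> k" and alpha: "0 \<le> \<alpha>" "\<alpha> < 1" and c_shift: "\<beta> 0 < c"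
    and sigma_pos: "0 < \<sigma>" and Fk_cont: "cont_klinear c \<alpha> \<beta> e k Fk"
    and eta_c: "0 > 2 * real k * \<eta>c" and eta_gap: "2 * real k * \<eta>c > \<eta>s"
    and beta_critical: "\<And>i. i < m \<Longrightarrow> \<eta>c \<le> \<beta> i"
    and beta_stable: "\<And>n. m \<le> n \<Longrightarrow> \<beta> n \<le> \<eta>s"
    and W_meas: "\<And>t. W t \<in> borel_measurable M"
    and W_cont: "\<And>\<omega>. \<omega> \<in> space M \<Longrightarrow> continuous_on UNIV (\<lambda>t. W t \<omega>)"
    and W_sublin: "\<And>\<omega>. \<omega> \<in> space M \<Longrightarrow> ((\<lambda>t. W t \<omega> / t) \<longlongrightarrow> 0) at_bot"
begin

definition "tuples = {..<k} \<rightarrow>\<^sub>E {..<m}"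
definition "noise = \<sigma> * (real k - 1)"
definition "gap = real k * \<eta>c - \<eta>s"
definition "rate n i = (\<Sum>j<k. \<beta> (i j)) - \<beta> n"
definition "coef \<xi> n i = (\<Prod>j<k. inner \<xi> (e (i j))) * inner (Fk (\<lambda>j. e (i j))) (e n)"
text \<open>\<open>hhat_coord n\<close> is the paper's \<open>h^{app,n}\<close> without the prefactor \<open>exp ((k - 1) z\<^sub>\<sigma>)\<close>.\<close>

definition "hhat_coord n \<xi> \<omega> = (\<Sum>i\<in>tuples. coef \<xi> n i * M_coef k \<sigma> \<beta> W n i \<omega>)"

definition "integrand \<xi> \<omega> s = exp (noise * W s \<omega>) *\<^sub>R sg \<beta> e (- s) (Ps e m (Fk (\<lambda>j. sg \<beta> e s \<xi>)))"
definition "mode_integrand \<xi> \<omega> n s = (if m \<le> n then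
    \<Sum>i\<in>tuples. coef \<xi> n i * exp (rate n i * s + noise * W s \<omega>) else 0)"
definition "mode_weight \<xi> n = real (card tuples) * (\<Sum>i\<in>tuples. (coef \<xi> n i)\<^sup>2)"

lemma finite_tuples: "finite tuples"
  by (simp add: tuples_def finite_PiE)

lemma noise_pos: "noise > 0"
  using sigma_pos k_ge by (simp add: noise_def)

lemma eta_c_neg: "\<eta>c < 0"
  using eta_c k_ge by (simp add: mult_less_0_iff)

lemma gap_pos: "gap > 0"
proof -
  have "real k * \<eta>c > 2 * real k * \<eta>c"
    using eta_c_neg k_ge by (simp add: mult_pos_neg)
  with eta_gap show ?thesis
    unfolding gap_def by linarith
qed

lemma beta_le_beta_0: "\<beta> n \<le> \<beta> 0"
  by (induction n) (use beta_mono order_trans in auto)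

lemma rate_ge:
  assumes "i \<in> tuples" "m \<le> n"
  shows "rate n i \<ge> real k * \<eta>c - \<beta> n" "rate n i \<ge> gap"
proof -
  have "(\<Sum>j<k. \<eta>c) \<le> (\<Sum>j<k. \<beta> (i j))"
    by (rule sum_mono) (use assms(1) beta_critical in \<open>auto simp: tuples_def PiE_iff\<close>)
  then show "rate n i \<ge> real k * \<eta>c - \<beta> n"
    by (simp add: rate_def)
  then show "rate n i \<ge> gap"
    using beta_stable[OF assms(2)] by (simp add: gap_def)
qed

text \<open>Sublinear growth of the paths lets the noise absorb only half of the spectral gap.\<close>

lemma noise_W_bound:
  assumes "\<omega> \<in> space M"
  obtains C where "\<And>s. s \<le> 0 \<Longrightarrow> noise * W s \<omega> \<le> C + gap / 2 * (- s)"
proof -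
  have "gap / (2 * noise) > 0"
    using gap_pos noise_pos by simp
  then obtain C where C: "\<And>s. s \<le> 0 \<Longrightarrow> \<bar>W s \<omega>\<bar> \<le> C + gap / (2 * noise) * (- s)"
    using sublinear_growth_bound[OF W_cont[OF assms] W_sublin[OF assms]] by blast
  have "noise * W s \<omega> \<le> noise * C + gap / 2 * (- s)" if "s \<le> 0" for s
  proof -
    have "W s \<omega> \<le> C + gap / (2 * noise) * (- s)"
      using C[OF that] by linarith
    then have "noise * W s \<omega> \<le> noise * (C + gap / (2 * noise) * (- s))"
      by (rule mult_left_mono) (use noise_pos in simp)
    also have "\<dots> = noise * C + gap / 2 * (- s)"
      using noise_pos by (simp add: field_simps)
    finally show ?thesis .
  qed
  then show ?thesis
    by (rule that)
qed

lemma exp_rate_bound: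
  assumes C: "\<And>s. s \<le> 0 \<Longrightarrow> noise * W s \<omega> \<le> C + gap / 2 * (- s)"
    and i: "i \<in> tuples" and n: "m \<le> n" and s: "s \<le> 0"
  shows "exp (rate n i * s + noise * W s \<omega>) \<le> exp C * exp (rate n i / 2 * s)"
    "exp (rate n i * s + noise * W s \<omega>) \<le> exp C * exp (gap / 2 * s)"
proof -
  have "(rate n i / 2 - gap / 2) * s \<le> 0"
    using rate_ge(2)[OF i n] s by (simp add: mult_nonneg_nonpos)
  then have *: "rate n i * s + noise * W s \<omega> \<le> C + rate n i / 2 * s"
    using C[OF s] by (simp add: algebra_simps)
  then show "exp (rate n i * s + noise * W s \<omega>) \<le> exp C * exp (rate n i / 2 * s)"
    by (simp add: exp_add[symmetric])
  have "rate n i / 2 * s \<le> gap / 2 * s"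
    using rate_ge(2)[OF i n] s by (simp add: mult_right_mono_neg)
  with * show "exp (rate n i * s + noise * W s \<omega>) \<le> exp C * exp (gap / 2 * s)"
    by (simp add: exp_add[symmetric])
qed

lemma M_coef_eq: "M_coef k \<sigma> \<beta> W n i \<omega> = integral {..0} (\<lambda>s. exp (rate n i * s + noise * W s \<omega>))"
  by (simp add: M_coef_def rate_def noise_def)

lemma M_integrand:
  assumes \<omega>: "\<omega> \<in> space M" and C: "\<And>s. s \<le> 0 \<Longrightarrow> noise * W s \<omega> \<le> C + gap / 2 * (- s)"
    and i: "i \<in> tuples" and n: "m \<le> n"
  shows "(\<lambda>s. exp (rate n i * s + noise * W s \<omega>)) integrable_on {..0}"
    "set_integrable lborel {..0} (\<lambda>s. exp (rate n i * s + noise * W s \<omega>))"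
    "\<bar>M_coef k \<sigma> \<beta> W n i \<omega>\<bar> \<le> 2 * exp C / rate n i"
proof -
  have "rate n i / 2 > 0"
    using rate_ge(2)[OF i n] gap_pos by simp
  moreover have "continuous_on UNIV (\<lambda>s. exp (rate n i * s + noise * W s \<omega>))"
    using W_cont[OF \<omega>] by (intro continuous_intros)
  moreover have "\<bar>exp (rate n i * s + noise * W s \<omega>)\<bar> \<le> exp C * exp (rate n i / 2 * s)" if "s \<le> 0" for s
    using exp_rate_bound(1)[OF C i n that] by simp
  ultimately have D: "(\<lambda>s. exp (rate n i * s + noise * W s \<omega>)) integrable_on {..0}"
    "set_integrable lborel {..0} (\<lambda>s. exp (rate n i * s + noise * W s \<omega>))"
    "\<bar>integral {..0} (\<lambda>s. exp (rate n i * s + noise * W s \<omega>))\<bar> \<le> exp C / (rate n i / 2)"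
    using integrable_exp_dominated by blast+
  show "(\<lambda>s. exp (rate n i * s + noise * W s \<omega>)) integrable_on {..0}"
    "set_integrable lborel {..0} (\<lambda>s. exp (rate n i * s + noise * W s \<omega>))"
    using D(1,2) .
  show "\<bar>M_coef k \<sigma> \<beta> W n i \<omega>\<bar> \<le> 2 * exp C / rate n i"
    using D(3) by (simp add: M_coef_eq mult_ac)
qed

lemma borel_measurable_M_coef:
  assumes "i \<in> tuples" "m \<le> n"
  shows "(\<lambda>\<omega>. M_coef k \<sigma> \<beta> W n i \<omega>) \<in> borel_measurable M"
proof -
  have "(\<lambda>\<omega>. integral {..0} (\<lambda>s. exp (rate n i * s + noise * W s \<omega>))) \<in> borel_measurable M"
  proof (rule borel_measurable_process_integral[where \<Phi>="\<lambda>s x. exp (rate n i * s + noise * x)",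
        OF W_meas W_cont])
    show "continuous_on UNIV (\<lambda>p::real \<times> real. exp (rate n i * fst p + noise * snd p))"
      by (intro continuous_intros)
    fix \<omega>
    assume \<omega>: "\<omega> \<in> space M"
    then obtain C where "\<And>s. s \<le> 0 \<Longrightarrow> noise * W s \<omega> \<le> C + gap / 2 * (- s)"
      using noise_W_bound by blast
    from M_integrand(2)[OF \<omega> this assms]
    show "set_integrable lborel {..0} (\<lambda>s. exp (rate n i * s + noise * W s \<omega>))" .
  qed
  then show ?thesis
    by (simp add: M_coef_eq)
qed

lemma Fk_sg_Hc:
  assumes "\<xi> \<in> Hc e m"
  shows "Fk (\<lambda>j. sg \<beta> e s \<xi>) = (\<Sum>i\<in>tuples.
      (\<Prod>j<k. exp (\<beta> (i j) * s) * inner \<xi> (e (i j))) *\<^sub>R Fk (\<lambda>j. e (i j)))"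
  using cont_klinear_expand[OF Fk_cont basis, where m = m and a = "\<lambda>j l. exp (\<beta> l * s) * inner \<xi> (e l)"]
  by (simp add: sg_Hc[OF basis assms] tuples_def)

lemma inner_integrand_basis:
  assumes \<xi>: "\<xi> \<in> Hc e m" and s: "s \<le> 0"
  shows "inner (integrand \<xi> \<omega> s) (e n) = mode_integrand \<xi> \<omega> n s"
proof -
  have "exp (noise * W s \<omega>) * (exp (- (\<beta> n * s)) *
      ((\<Prod>j<k. exp (\<beta> (i j) * s) * inner \<xi> (e (i j))) * inner (Fk (\<lambda>j. e (i j))) (e n)))
    = coef \<xi> n i * exp (rate n i * s + noise * W s \<omega>)" for i
  proof -
    have "(\<Prod>j<k. exp (\<beta> (i j) * s) * inner \<xi> (e (i j)))
        = exp ((\<Sum>j<k. \<beta> (i j)) * s) * (\<Prod>j<k. inner \<xi> (e (i j)))"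
      by (simp add: prod.distrib exp_sum sum_distrib_right)
    moreover have "exp (noise * W s \<omega>) * exp (- (\<beta> n * s)) * exp ((\<Sum>j<k. \<beta> (i j)) * s)
        = exp (rate n i * s + noise * W s \<omega>)"
      by (simp add: rate_def exp_add[symmetric] algebra_simps)
    ultimately show ?thesis
      unfolding coef_def by (simp add: mult.assoc mult.left_commute)
  qed
  moreover have "inner (integrand \<xi> \<omega> s) (e n) = exp (noise * W s \<omega>) * (exp (- (\<beta> n * s)) *
      (if m \<le> n then inner (Fk (\<lambda>j. sg \<beta> e s \<xi>)) (e n) else 0))"
    using inner_sg_basis[OF basis beta_le_beta_0, of "- s"] inner_Ps_basis[OF basis] s
    by (simp add: integrand_def)
  ultimately show ?thesis
    unfolding mode_integrand_def Fk_sg_Hc[OF \<xi>]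
    by (simp add: inner_sum_left sum_distrib_left)
qed

lemma mode_weight_nonneg: "mode_weight \<xi> n \<ge> 0"
  by (simp add: mode_weight_def sum_nonneg)

lemma summable_mode_weight: "summable (mode_weight \<xi>)"
proof -
  have "summable (\<lambda>n. (coef \<xi> n i)\<^sup>2)" for i
    using summable_mult[OF summable_inner_basis_squared[OF basis], of "(\<Prod>j<k. inner \<xi> (e (i j)))\<^sup>2"]
    by (simp add: coef_def power_mult_distrib)
  then show ?thesis
    unfolding mode_weight_def by (intro summable_mult summable_sum)
qed

lemma mode_integrand_squared_le:
  assumes C: "\<And>s. s \<le> 0 \<Longrightarrow> noise * W s \<omega> \<le> C + gap / 2 * (- s)" and s: "s \<le> 0"
  shows "(mode_integrand \<xi> \<omega> n s)\<^sup>2 \<le> (exp C * exp (gap / 2 * s))\<^sup>2 * mode_weight \<xi> n"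
proof (cases "m \<le> n")
  case True
  let ?G = "exp C * exp (gap / 2 * s)"
  let ?X = "\<lambda>i. exp (rate n i * s + noise * W s \<omega>)"
  have "(mode_integrand \<xi> \<omega> n s)\<^sup>2 = (\<Sum>i\<in>tuples. coef \<xi> n i * ?X i)\<^sup>2"
    using True by (simp add: mode_integrand_def)
  also have "\<dots> \<le> (\<Sum>i\<in>tuples. (coef \<xi> n i * ?X i)\<^sup>2) * real (card tuples)"
    by (rule sum_squared_le_sum_of_squares)
  also have "\<dots> \<le> (\<Sum>i\<in>tuples. (coef \<xi> n i)\<^sup>2 * ?G\<^sup>2) * real (card tuples)"
  proof (intro mult_right_mono sum_mono)
    fix i
    assume "i \<in> tuples"
    from exp_rate_bound(2)[OF C this True s] have "(?X i)\<^sup>2 \<le> ?G\<^sup>2"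
      by (intro power_mono) auto
    then show "(coef \<xi> n i * ?X i)\<^sup>2 \<le> (coef \<xi> n i)\<^sup>2 * ?G\<^sup>2"
      by (simp add: power_mult_distrib mult_left_mono)
  qed simp
  also have "\<dots> = ?G\<^sup>2 * mode_weight \<xi> n"
    by (simp add: mode_weight_def sum_distrib_right[symmetric] mult_ac)
  finally show ?thesis .
qed (simp add: mode_integrand_def mode_weight_nonneg)

lemma norm_integrand_le:
  assumes \<xi>: "\<xi> \<in> Hc e m" and C: "\<And>s. s \<le> 0 \<Longrightarrow> noise * W s \<omega> \<le> C + gap / 2 * (- s)"
    and s: "s \<le> 0"
  shows "norm (integrand \<xi> \<omega> s) \<le> (exp C * sqrt (suminf (mode_weight \<xi>))) * exp (gap / 2 * s)"
proof (rule power2_le_imp_le)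
  let ?G = "exp C * exp (gap / 2 * s)"
  have "(norm (integrand \<xi> \<omega> s))\<^sup>2 = (\<Sum>n. (mode_integrand \<xi> \<omega> n s)\<^sup>2)"
    using norm_squared_eq_suminf[OF basis] by (simp add: inner_integrand_basis[OF \<xi> s])
  also have "\<dots> \<le> (\<Sum>n. ?G\<^sup>2 * mode_weight \<xi> n)"
  proof (rule suminf_le)
    show "summable (\<lambda>n. (mode_integrand \<xi> \<omega> n s)\<^sup>2)"
      using summable_inner_basis_squared[OF basis, of "integrand \<xi> \<omega> s"]
      by (simp add: inner_integrand_basis[OF \<xi> s])
    show "summable (\<lambda>n. ?G\<^sup>2 * mode_weight \<xi> n)"
      by (rule summable_mult[OF summable_mode_weight])
  qed (rule mode_integrand_squared_le[OF C s])
  also have "\<dots> = ((exp C * sqrt (suminf (mode_weight \<xi>))) * exp (gap / 2 * s))\<^sup>2"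
    using suminf_mult[OF summable_mode_weight] suminf_nonneg[OF summable_mode_weight mode_weight_nonneg]
    by (simp add: power_mult_distrib)
  finally show "(norm (integrand \<xi> \<omega> s))\<^sup>2 \<le> ((exp C * sqrt (suminf (mode_weight \<xi>))) * exp (gap / 2 * s))\<^sup>2" .
qed (simp add: suminf_nonneg[OF summable_mode_weight mode_weight_nonneg])

lemma continuous_mode_integrand:
  assumes "\<omega> \<in> space M"
  shows "continuous_on UNIV (mode_integrand \<xi> \<omega> n)"
  using W_cont[OF assms] unfolding mode_integrand_def[abs_def]
  by (cases "m \<le> n") (auto intro!: continuous_intros)

lemma norm_integrand_tail_squared_le:
  assumes \<xi>: "\<xi> \<in> Hc e m" and C: "\<And>s. s \<le> 0 \<Longrightarrow> noise * W s \<omega> \<le> C + gap / 2 * (- s)"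
    and x: "x \<le> 0"
  shows "(norm (integrand \<xi> \<omega> x - (\<Sum>n<N. mode_integrand \<xi> \<omega> n x *\<^sub>R e n)))\<^sup>2
    \<le> (exp C)\<^sup>2 * (\<Sum>n. if N \<le> n then mode_weight \<xi> n else 0)"
proof -
  let ?tail = "\<lambda>n. if N \<le> n then mode_weight \<xi> n else 0"
  let ?d = "integrand \<xi> \<omega> x - (\<Sum>n<N. mode_integrand \<xi> \<omega> n x *\<^sub>R e n)"
  have coord: "inner ?d (e n) = (if N \<le> n then mode_integrand \<xi> \<omega> n x else 0)" for n
    by (simp add: inner_diff_left inner_sum_left hilbert_basis_orthonormal[OF basis]
        inner_integrand_basis[OF \<xi> x] if_distrib sum.delta' cong: if_cong)
  have "exp (gap / 2 * x) \<le> 1"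
    using x gap_pos by (simp add: mult_nonneg_nonpos)
  then have exp_le: "(exp C * exp (gap / 2 * x))\<^sup>2 \<le> (exp C)\<^sup>2"
    by (simp add: power_mult_distrib power_le_one mult_left_le)
  have coord_le: "(if N \<le> n then mode_integrand \<xi> \<omega> n x else 0)\<^sup>2 \<le> (exp C)\<^sup>2 * ?tail n" for n
  proof (cases "N \<le> n")
    case True
    have "(mode_integrand \<xi> \<omega> n x)\<^sup>2 \<le> (exp C * exp (gap / 2 * x))\<^sup>2 * mode_weight \<xi> n"
      by (rule mode_integrand_squared_le[OF C x])
    also have "\<dots> \<le> (exp C)\<^sup>2 * mode_weight \<xi> n"
      by (rule mult_right_mono[OF exp_le mode_weight_nonneg])
    finally show ?thesis
      using True by simp
  qed simp
  have summable_tail: "summable ?tail"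
    by (rule summable_comparison_test'[OF summable_mode_weight, where N=0]) (auto simp: mode_weight_nonneg)
  have "(norm ?d)\<^sup>2 = (\<Sum>n. (if N \<le> n then mode_integrand \<xi> \<omega> n x else 0)\<^sup>2)"
    using norm_squared_eq_suminf[OF basis] coord by simp
  also have "\<dots> \<le> (\<Sum>n. (exp C)\<^sup>2 * ?tail n)"
    using summable_inner_basis_squared[OF basis, of ?d] coord summable_mult[OF summable_tail]
    by (intro suminf_le coord_le) auto
  also have "\<dots> = (exp C)\<^sup>2 * (\<Sum>n. ?tail n)"
    by (rule suminf_mult[OF summable_tail])
  finally show ?thesis .
qed

lemma integrand_uniform_approx:
  assumes \<xi>: "\<xi> \<in> Hc e m" and \<omega>: "\<omega> \<in> space M"
    and C: "\<And>s. s \<le> 0 \<Longrightarrow> noise * W s \<omega> \<le> C + gap / 2 * (- s)"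
    and b: "b \<le> 0" and r: "r > 0"
  shows "\<exists>g. (\<forall>x\<in>{a..b}. norm (integrand \<xi> \<omega> x - g x) \<le> r) \<and> g integrable_on {a..b}"
proof -
  obtain N where N: "(\<Sum>n. if N \<le> n then mode_weight \<xi> n else 0) < r\<^sup>2 / (exp C)\<^sup>2"
    using summable_tail_less[OF summable_mode_weight] r by (metis divide_pos_pos exp_gt_zero zero_less_power)
  define g where "g s = (\<Sum>n<N. mode_integrand \<xi> \<omega> n s *\<^sub>R e n)" for s
  have "norm (integrand \<xi> \<omega> x - g x) \<le> r" if "x \<in> {a..b}" for x
  proof (rule power2_le_imp_le)
    have "(norm (integrand \<xi> \<omega> x - g x))\<^sup>2 \<le> (exp C)\<^sup>2 * (\<Sum>n. if N \<le> n then mode_weight \<xi> n else 0)"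
      unfolding g_def using that b by (intro norm_integrand_tail_squared_le[OF \<xi> C]) auto
    also have "\<dots> \<le> r\<^sup>2"
      using N by (simp add: field_simps)
    finally show "(norm (integrand \<xi> \<omega> x - g x))\<^sup>2 \<le> r\<^sup>2" .
  qed (use r in simp)
  moreover have "g integrable_on {a..b}"
    unfolding g_def
    by (intro integrable_sum integrable_on_scaleR_left integrable_continuous_real
        continuous_on_subset[OF continuous_mode_integrand[OF \<omega>]]) auto
  ultimately show ?thesis
    by blast
qed

lemma integrable_integrand:
  assumes \<xi>: "\<xi> \<in> Hc e m" and \<omega>: "\<omega> \<in> space M"
  shows "integrand \<xi> \<omega> integrable_on {..0}"
proof -
  obtain C where C: "\<And>s. s \<le> 0 \<Longrightarrow> noise * W s \<omega> \<le> C + gap / 2 * (- s)"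
    using noise_W_bound[OF \<omega>] by blast
  have "((\<lambda>s. exp (gap / 2 * s)) has_integral 1 / (gap / 2)) {..0}"
    by (rule exp_integral_atMost_0(2)) (use gap_pos in simp)
  from integrable_cmul[OF has_integral_integrable[OF this], of "exp C * sqrt (suminf (mode_weight \<xi>))"]
  have "(\<lambda>s. exp C * sqrt (suminf (mode_weight \<xi>)) * exp (gap / 2 * s)) integrable_on {..0}"
    by simp
  with integrand_uniform_approx[OF \<xi> \<omega> C] norm_integrand_le[OF \<xi> C] show ?thesis
    by (rule integrable_on_atMost_uniform_approx)
qed

lemma inner_hhat_app_basis:
  assumes \<xi>: "\<xi> \<in> Hc e m" and \<omega>: "\<omega> \<in> space M"
  shows "inner (hhat_app k \<sigma> \<beta> e m Fk W \<xi> \<omega>) (e n) = (if m \<le> n then hhat_coord n \<xi> \<omega> else 0)"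
proof -
  obtain C where C: "\<And>s. s \<le> 0 \<Longrightarrow> noise * W s \<omega> \<le> C + gap / 2 * (- s)"
    using noise_W_bound[OF \<omega>] by blast
  have "hhat_app k \<sigma> \<beta> e m Fk W \<xi> \<omega> = integral {..0} (integrand \<xi> \<omega>)"
    by (simp add: hhat_app_def integrand_def[abs_def] noise_def)
  then have "inner (hhat_app k \<sigma> \<beta> e m Fk W \<xi> \<omega>) (e n) = integral {..0} (\<lambda>s. inner (integrand \<xi> \<omega> s) (e n))"
    using integral_linear[OF integrable_integrand[OF \<xi> \<omega>] bounded_linear_inner_left[of "e n"]]
    by (simp add: o_def)
  also have "\<dots> = integral {..0} (mode_integrand \<xi> \<omega> n)"
    by (rule integral_cong) (simp add: inner_integrand_basis[OF \<xi>])
  also have "\<dots> = (if m \<le> n then hhat_coord n \<xi> \<omega> else 0)"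
  proof (cases "m \<le> n")
    case True
    have "(\<lambda>s. coef \<xi> n i * exp (rate n i * s + noise * W s \<omega>)) integrable_on {..0}"
      if "i \<in> tuples" for i
      using integrable_on_cmult_left[OF M_integrand(1)[OF \<omega> C that True]] by simp
    from integral_sum[OF finite_tuples this] True show ?thesis
      by (simp add: mode_integrand_def[abs_def] hhat_coord_def M_coef_eq)
  qed (simp add: mode_integrand_def[abs_def])
  finally show ?thesis .
qed

lemma inner_hhat_app_squared_le:
  assumes \<xi>: "\<xi> \<in> Hc e m" and \<omega>: "\<omega> \<in> space M" and n: "m \<le> n"
    and C: "\<And>s. s \<le> 0 \<Longrightarrow> noise * W s \<omega> \<le> C + gap / 2 * (- s)"
  shows "(inner (hhat_app k \<sigma> \<beta> e m Fk W \<xi> \<omega>) (e n))\<^sup>2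
    \<le> (2 * exp C / (real k * \<eta>c - \<beta> n))\<^sup>2 * mode_weight \<xi> n"
proof -
  let ?L = "real k * \<eta>c - \<beta> n"
  have L: "?L > 0"
    using beta_stable[OF n] gap_pos by (simp add: gap_def)
  have M_le: "(M_coef k \<sigma> \<beta> W n i \<omega>)\<^sup>2 \<le> (2 * exp C / ?L)\<^sup>2" if i: "i \<in> tuples" for i
  proof -
    have "\<bar>M_coef k \<sigma> \<beta> W n i \<omega>\<bar> \<le> 2 * exp C / rate n i"
      by (rule M_integrand(3)[OF \<omega> C i n])
    also have "\<dots> \<le> 2 * exp C / ?L"
      using rate_ge(1)[OF i n] L by (intro divide_left_mono) auto
    finally have "\<bar>M_coef k \<sigma> \<beta> W n i \<omega>\<bar>\<^sup>2 \<le> (2 * exp C / ?L)\<^sup>2"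
      by (rule power_mono) simp
    then show ?thesis
      by simp
  qed
  have "(inner (hhat_app k \<sigma> \<beta> e m Fk W \<xi> \<omega>) (e n))\<^sup>2 = (\<Sum>i\<in>tuples. coef \<xi> n i * M_coef k \<sigma> \<beta> W n i \<omega>)\<^sup>2"
    using n by (simp add: inner_hhat_app_basis[OF \<xi> \<omega>] hhat_coord_def)
  also have "\<dots> \<le> (\<Sum>i\<in>tuples. (coef \<xi> n i * M_coef k \<sigma> \<beta> W n i \<omega>)\<^sup>2) * real (card tuples)"
    by (rule sum_squared_le_sum_of_squares)
  also have "\<dots> \<le> (\<Sum>i\<in>tuples. (coef \<xi> n i)\<^sup>2 * (2 * exp C / ?L)\<^sup>2) * real (card tuples)"
    using M_le by (intro mult_right_mono sum_mono) (simp_all add: power_mult_distrib mult_left_mono)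
  also have "\<dots> = (2 * exp C / ?L)\<^sup>2 * mode_weight \<xi> n"
    by (simp add: mode_weight_def sum_distrib_right[symmetric] mult_ac)
  finally show ?thesis .
qed

text \<open>The coordinates of \<open>hhat_app\<close> decay like \<open>1 / (real k * \<eta>c - \<beta> n)\<close>, which
  compensates the weight \<open>(c - \<beta> n) powr (2 * \<alpha>)\<close> of \<open>H_\<alpha>\<close> because \<open>\<alpha> < 1\<close>.\<close>

lemma in_Halpha_hhat_app:
  assumes \<xi>: "\<xi> \<in> Hc e m" and \<omega>: "\<omega> \<in> space M"
  shows "in_Halpha c \<alpha> \<beta> e (hhat_app k \<sigma> \<beta> e m Fk W \<xi> \<omega>)"
proof -
  obtain C where C: "\<And>s. s \<le> 0 \<Longrightarrow> noise * W s \<omega> \<le> C + gap / 2 * (- s)"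
    using noise_W_bound[OF \<omega>] by blast
  define D where "D = c - real k * \<eta>c"
  define K where "K = ((D + gap) / gap)\<^sup>2 + 1 / gap\<^sup>2"
  have "real k * \<eta>c \<le> \<eta>c"
    using k_ge eta_c_neg mult_right_mono_neg[of 1 "real k" \<eta>c] by simp
  moreover have "\<eta>c \<le> \<beta> 0"
    using beta_critical[of 0] m_pos by simp
  ultimately have D: "D \<ge> 0"
    using c_shift by (simp add: D_def)
  let ?H = "hhat_app k \<sigma> \<beta> e m Fk W \<xi> \<omega>"
  have "(c - \<beta> n) powr (2 * \<alpha>) * (inner ?H (e n))\<^sup>2 \<le> K * (2 * exp C)\<^sup>2 * mode_weight \<xi> n" for n
  proof (cases "m \<le> n")
    case True
    let ?L = "real k * \<eta>c - \<beta> n"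
    have L: "?L \<ge> gap"
      using beta_stable[OF True] by (simp add: gap_def)
    then have "(c - \<beta> n) powr (2 * \<alpha>) \<le> K * ?L\<^sup>2"
      using powr_le_shifted_square[OF D gap_pos _ alpha, of "c - \<beta> n"] by (simp add: K_def D_def)
    moreover note inner_hhat_app_squared_le[OF \<xi> \<omega> True C]
    ultimately have "(c - \<beta> n) powr (2 * \<alpha>) * (inner ?H (e n))\<^sup>2
        \<le> (K * ?L\<^sup>2) * ((2 * exp C / ?L)\<^sup>2 * mode_weight \<xi> n)"
      by (rule mult_mono) (auto simp: mode_weight_nonneg K_def)
    also have "\<dots> = K * (2 * exp C)\<^sup>2 * mode_weight \<xi> n"
      using L gap_pos by (simp add: field_simps)
    finally show ?thesis .
  qed (simp add: inner_hhat_app_basis[OF \<xi> \<omega>] K_def mode_weight_nonneg)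
  then show ?thesis
    unfolding in_Halpha_def
    by (intro summable_comparison_test'[OF summable_mult[OF summable_mode_weight], where N=0]) auto
qed

lemma borel_measurable_hhat_coord:
  assumes "m \<le> n"
  shows "(\<lambda>\<omega>. hhat_coord n \<xi> \<omega>) \<in> borel_measurable M"
  unfolding hhat_coord_def
  by (intro borel_measurable_sum borel_measurable_times borel_measurable_const
      borel_measurable_M_coef assms)

lemma hom_poly_hhat_coord:
  "\<exists>P. hom_poly m k P \<and> (\<forall>\<xi>\<in>Hc e m. r * hhat_coord n \<xi> \<omega> = P (\<lambda>i. inner \<xi> (e i)))"
proof (intro exI conjI ballI)
  show "hom_poly m k (\<lambda>x. \<Sum>i\<in>tuples. (\<Prod>j<k. x (i j)) *
      (r * (inner (Fk (\<lambda>j. e (i j))) (e n) * M_coef k \<sigma> \<beta> W n i \<omega>)))"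
    unfolding tuples_def by (rule hom_poly_multiindex_sum)
  show "r * hhat_coord n \<xi> \<omega> = (\<Sum>i\<in>tuples. (\<Prod>j<k. inner \<xi> (e (i j))) *
      (r * (inner (Fk (\<lambda>j. e (i j))) (e n) * M_coef k \<sigma> \<beta> W n i \<omega>)))" for \<xi>
    by (simp add: hhat_coord_def coef_def sum_distrib_left mult_ac)
qed

lemma sums_hhat_app:
  assumes "\<xi> \<in> Hc e m" "\<omega> \<in> space M"
  shows "(\<lambda>n. if m \<le> n then hhat_coord n \<xi> \<omega> *\<^sub>R e n else 0) sums hhat_app k \<sigma> \<beta> e m Fk W \<xi> \<omega>"
proof -
  have "(\<lambda>n. inner (hhat_app k \<sigma> \<beta> e m Fk W \<xi> \<omega>) (e n) *\<^sub>R e n)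
      = (\<lambda>n. if m \<le> n then hhat_coord n \<xi> \<omega> *\<^sub>R e n else 0)"
    by (simp add: inner_hhat_app_basis[OF assms] fun_eq_iff)
  then show ?thesis
    using hilbert_basis_expansion[OF basis, of "hhat_app k \<sigma> \<beta> e m Fk W \<xi> \<omega>"] by simp
qed

lemma sums_h_app:
  assumes "\<xi> \<in> Hc e m" "\<omega> \<in> space M"
  shows "(\<lambda>n. if m \<le> n then (exp ((real k - 1) * z_sigma \<sigma> W \<omega>) * hhat_coord n \<xi> \<omega>) *\<^sub>R e n else 0)
    sums h_app k \<sigma> \<beta> e m Fk W \<xi> \<omega>"
  using bounded_linear.sums[OF bounded_linear_scaleR_right sums_hhat_app[OF assms],
      of "exp ((real k - 1) * z_sigma \<sigma> W \<omega>)"]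
  by (simp add: h_app_def if_distrib cong: if_cong)

lemma random_hom_poly_hhat_app: "random_hom_poly M c \<alpha> \<beta> e m k (hhat_app k \<sigma> \<beta> e m Fk W)"
  unfolding random_hom_poly_def
  using sums_hhat_app in_Halpha_hhat_app borel_measurable_hhat_coord hom_poly_hhat_coord[of 1]
  by (intro exI[of _ hhat_coord]) simp

lemma random_hom_poly_h_app: "random_hom_poly M c \<alpha> \<beta> e m k (h_app k \<sigma> \<beta> e m Fk W)"
  unfolding random_hom_poly_def
proof (intro exI[of _ "\<lambda>n \<xi> \<omega>. exp ((real k - 1) * z_sigma \<sigma> W \<omega>) * hhat_coord n \<xi> \<omega>"] conjI ballI allI impI)
  fix \<xi> \<omega>
  assume "\<xi> \<in> Hc e m" "\<omega> \<in> space M"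
  then show "in_Halpha c \<alpha> \<beta> e (h_app k \<sigma> \<beta> e m Fk W \<xi> \<omega>)"
    using in_Halpha_lincomb[OF in_Halpha_hhat_app in_Halpha_0] by (simp add: h_app_def)
next
  fix n \<xi>
  assume "m \<le> n"
  note [measurable] = borel_measurable_hhat_coord[OF this]
    borel_measurable_z_sigma[OF W_meas W_cont W_sublin]
  show "(\<lambda>\<omega>. exp ((real k - 1) * z_sigma \<sigma> W \<omega>) * hhat_coord n \<xi> \<omega>) \<in> borel_measurable M"
    by measurable
qed (use sums_h_app hom_poly_hhat_coord in auto)

end

theorem corollary6p10:
  fixes e :: "nat \<Rightarrow> 'a::{real_inner, complete_space}"
    and \<beta> :: "nat \<Rightarrow> real"
    and m k :: nat
    and \<alpha> c \<sigma> \<eta>c \<eta>s :: real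
    and Fk :: "(nat \<Rightarrow> 'a) \<Rightarrow> 'a"
    and M :: "'o measure"
    and W :: "real \<Rightarrow> 'o \<Rightarrow> real"
    and h hhat :: "'a \<Rightarrow> 'o \<Rightarrow> 'a"
  assumes basis: "hilbert_basis e"
    and beta_mono: "\<And>n. \<beta> (Suc n) \<le> \<beta> n"
    and m_pos: "1 \<le> m"
    and k_ge: "2 \<le> k"
    and alpha: "0 \<le> \<alpha>" "\<alpha> < 1"
    and c_shift: "\<beta> 0 < c"
    and sigma_pos: "0 < \<sigma>"
    and Fk_cont: "cont_klinear c \<alpha> \<beta> e k Fk"
    and Lambda_2k: "0 > 2 * real k * \<eta>c" "2 * real k * \<eta>c > \<eta>s"
        "\<And>i. i < m \<Longrightarrow> \<eta>c \<le> \<beta> i" "\<And>n. m \<le> n \<Longrightarrow> \<beta> n \<le> \<eta>s"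
    and prob: "prob_space M"
    and W_meas: "\<And>t. W t \<in> borel_measurable M"
    and W_cont: "\<And>\<omega>. \<omega> \<in> space M \<Longrightarrow> continuous_on UNIV (\<lambda>t. W t \<omega>)"
    and W_zero: "\<And>\<omega>. \<omega> \<in> space M \<Longrightarrow> W 0 \<omega> = 0"
    and W_sublin_bot: "\<And>\<omega>. \<omega> \<in> space M \<Longrightarrow> ((\<lambda>t. W t \<omega> / t) \<longlongrightarrow> 0) at_bot"
    and W_sublin_top: "\<And>\<omega>. \<omega> \<in> space M \<Longrightarrow> ((\<lambda>t. W t \<omega> / t) \<longlongrightarrow> 0) at_top"
    and h_approx: "small_error M c \<alpha> \<beta> e m k h (h_app k \<sigma> \<beta> e m Fk W)"
    and hhat_approx: "small_error M c \<alpha> \<beta> e m k hhat (hhat_app k \<sigma> \<beta> e m Fk W)"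
  shows
    "(\<forall>\<xi>\<in>Hc e m. \<forall>\<omega>\<in>space M.
        (\<lambda>n. if m \<le> n then
              (exp ((real k - 1) * z_sigma \<sigma> W \<omega>) *
               (\<Sum>i\<in>{..<k} \<rightarrow>\<^sub>E {..<m}.
                  (\<Prod>j<k. inner \<xi> (e (i j))) * inner (Fk (\<lambda>j. e (i j))) (e n)
                  * M_coef k \<sigma> \<beta> W n i \<omega>)) *\<^sub>R e n
             else 0)
        sums h_app k \<sigma> \<beta> e m Fk W \<xi> \<omega>)
     \<and> random_hom_poly M c \<alpha> \<beta> e m k (h_app k \<sigma> \<beta> e m Fk W)
     \<and> leading_order_taylor M c \<alpha> \<beta> e m k (h_app k \<sigma> \<beta> e m Fk W) h
     \<and> (\<forall>\<xi>\<in>Hc e m. \<forall>\<omega>\<in>space M.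
        (\<lambda>n. if m \<le> n then
              (\<Sum>i\<in>{..<k} \<rightarrow>\<^sub>E {..<m}.
                  (\<Prod>j<k. inner \<xi> (e (i j))) * inner (Fk (\<lambda>j. e (i j))) (e n)
                  * M_coef k \<sigma> \<beta> W n i \<omega>) *\<^sub>R e n
             else 0)
        sums hhat_app k \<sigma> \<beta> e m Fk W \<xi> \<omega>)
     \<and> random_hom_poly M c \<alpha> \<beta> e m k (hhat_app k \<sigma> \<beta> e m Fk W)
     \<and> leading_order_taylor M c \<alpha> \<beta> e m k (hhat_app k \<sigma> \<beta> e m Fk W) hhat"
proof -
  interpret leading_order_setting e \<beta> m k \<alpha> c \<sigma> \<eta>c \<eta>s Fk M W
    using basis beta_mono m_pos k_ge alpha c_shift sigma_pos Fk_cont Lambda_2k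
      W_meas W_cont W_sublin_bot
    by unfold_locales auto
  note coordinates = hhat_coord_def coef_def tuples_def
  show ?thesis
    unfolding leading_order_taylor_def
    using sums_h_app[unfolded coordinates] sums_hhat_app[unfolded coordinates]
      random_hom_poly_h_app random_hom_poly_hhat_app h_approx hhat_approx
    by (intro conjI ballI) simp_all
qed

end
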